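(* Let $F$ be a cumulative distribution function of a probability distribution supported on $\mathcal{S}$, twice continuously differentiable on $\mathcal{S}$, and let $\boldsymbol{X}_1,\boldsymbol{X}_2,\dots$ be i.i.d. with c.d.f. $F$. Let $\boldsymbol{x}\in\mathrm{Int}(\mathcal{S})$ be such that $0<F(\boldsymbol{x})<1$. Then $$n^{1/2}\big(F_{n,m}^{\star}(\boldsymbol{x}) - F_m^{\star}(\boldsymbol{x})\big)\xrightarrow{\ \mathscr{D}\ }\mathcal{N}(0,\sigma^2(\boldsymbol{x})),\quad\text{as } m,n\to\infty.$$ Moreover, as $m,n\to\infty$, $n^{1/2}(F_{n,m}^{\star}(\boldsymbol{x})-F(\boldsymbol{x}))\xrightarrow{\mathscr{D}}\mathcal{N}(0,\sigma^2(\boldsymbol{x}))$ if $n^{1/2}m^{-1}\to0$, and $n^{1/2}(F_{n,m}^{\star}(\boldsymbol{x})-F(\boldsymbol{x}))\xrightarrow{\mathscr{D}}\mathcal{N}(\lambda B(\boldsymbol{x}),\sigma^2(\boldsymbol{x}))$ if $n^{1/2}m^{-1}\to\lambda$ for a constant $\lambda>0$.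
   Context: Let $d\ge1$, $\|\boldsymbol{x}\|_1=\sum_i|x_i|$, $\mathcal{S}:=\{\boldsymbol{x}\in[0,1]^d:\|\boldsymbol{x}\|_1\le1\}$, $\mathrm{Int}(\mathcal{S}):=\{\boldsymbol{x}\in(0,1)^d:\|\boldsymbol{x}\|_1<1\}$. For $\boldsymbol{k}\in\mathbb{N}_0^d$ with $\|\boldsymbol{k}\|_1\le m$ (written $\boldsymbol{k}\in\mathbb{N}_0^d\cap m\mathcal{S}$), $P_{\boldsymbol{k},m}(\boldsymbol{x}) := \frac{m!}{(m-\|\boldsymbol{k}\|_1)!\prod_i k_i!}(1-\|\boldsymbol{x}\|_1)^{m-\|\boldsymbol{k}\|_1}\prod_i x_i^{k_i}$. $F_m^{\star}(\boldsymbol{x}) := \sum_{\boldsymbol{k}\in\mathbb{N}_0^d\cap m\mathcal{S}}F(\boldsymbol{k}/m)P_{\boldsymbol{k},m}(\boldsymbol{x})$; $F_n(\boldsymbol{x}) := n^{-1}\sum_{i=1}^n\mathbf{1}\{\boldsymbol{X}_i\le\boldsymbol{x}\}$ (componentwise); $F_{n,m}^{\star}(\boldsymbol{x}) := \sum_{\boldsymbol{k}\in\mathbb{N}_0^d\cap m\mathcal{S}}F_n(\boldsymbol{k}/m)P_{\boldsymbol{k},m}(\boldsymbol{x})$. Here $\sigma^2(\boldsymbol{x}) := F(\boldsymbol{x})(1-F(\boldsymbol{x}))$ and $B(\boldsymbol{x}) := \frac12\sum_{i,j=1}^d(x_i\mathbf{1}_{\{i=j\}}-x_ix_j)\frac{\partial^2}{\partial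 x_i\partial x_j}F(\boldsymbol{x})$. Throughout $m=m(n)$. *)

theory Defs
  imports "HOL-Probability.Probability"
begin

definition l1norm :: "real ^ 'd \<Rightarrow> real" where
  "l1norm x = (\<Sum>i\<in>UNIV. \<bar>x $ i\<bar>)"

definition simplexS :: "(real ^ 'd) set" where
  "simplexS = {x. (\<forall>i. 0 \<le> x $ i \<and> x $ i \<le> 1) \<and> l1norm x \<le> 1}"

definition simplexInt :: "(real ^ 'd) set" where
  "simplexInt = {x. (\<forall>i. 0 < x $ i \<and> x $ i < 1) \<and> l1norm x < 1}"

definition multi_idx :: "nat \<Rightarrow> (nat ^ 'd) set" where
  "multi_idx m = {k. (\<Sum>i\<in>UNIV. k $ i) \<le> m}"

definition norm1_idx :: "nat ^ 'd \<Rightarrow> nat" where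
  "norm1_idx k = (\<Sum>i\<in>UNIV. k $ i)"

definition bern_P :: "nat ^ 'd \<Rightarrow> nat \<Rightarrow> real ^ 'd \<Rightarrow> real" where
  "bern_P k m x =
     fact m / (fact (m - norm1_idx k) * (\<Prod>i\<in>UNIV. fact (k $ i)))
     * (1 - l1norm x) ^ (m - norm1_idx k) * (\<Prod>i\<in>UNIV. (x $ i) ^ (k $ i))"

definition bernstein :: "(real ^ 'd \<Rightarrow> real) \<Rightarrow> nat \<Rightarrow> real ^ 'd \<Rightarrow> real" where
  "bernstein G m x = (\<Sum>k\<in>multi_idx m. G (\<chi> i. real (k $ i) / real m) * bern_P k m x)"

definition mcdf :: "(real ^ 'd) measure \<Rightarrow> real ^ 'd \<Rightarrow> real" where
  "mcdf \<mu> x = measure \<mu> {y. \<forall>i. y $ i \<le> x $ i}"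

text \<open>Empirical c.d.f. of the sample X_1..X_n (here indexed 0..n-1).\<close>
definition ecdf :: "(nat \<Rightarrow> 'a \<Rightarrow> real ^ 'd) \<Rightarrow> nat \<Rightarrow> 'a \<Rightarrow> real ^ 'd \<Rightarrow> real" where
  "ecdf X n \<omega> x = (\<Sum>i<n. (if (\<forall>j. X i \<omega> $ j \<le> x $ j) then 1 else 0)) / real n"

definition normal_distr :: "real \<Rightarrow> real \<Rightarrow> real measure" where
  "normal_distr mu v = density lborel (normal_density mu (sqrt v))"

end

theory Submission
  imports Defs
begin

text \<open>
  The estimator is a sample mean: \<open>bernstein (ecdf X n \<omega>) m x\<close> averages the bounded
  i.i.d. variables \<open>bern_kernel m x (X i)\<close>, where \<open>bern_kernel m x y = \<Sum>\<^sub>k 1{y \<le> k/m} P\<^sub>k\<^sub>m(x)\<close>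
  smooths the indicator \<open>1{y \<le> x}\<close>, and their mean is \<open>bernstein F m x\<close>. So the first
  statistic is the CLT term of the indicators \<open>1{X\<^sub>i \<le> x}\<close> plus a centred normalised sum
  of variance at most \<open>\<integral>|bern_kernel m x - 1{\<cdot> \<le> x}| d\<mu>\<close>. As the multinomial weights
  \<open>P\<^sub>k\<^sub>m(x)\<close> concentrate at \<open>k/m = x\<close> with variance \<open>O(1/m)\<close>, this integral vanishes
  by continuity of \<open>F\<close> at \<open>x\<close>, and Slutsky's lemma gives the first claim. For the bias,
  a second-order Taylor expansion of \<open>F\<close> at \<open>x\<close> against the first two moments of the
  weights gives \<open>m (bernstein F m x - F x) \<rightarrow> B(x) = bias_coeff x\<close>, hence
  \<open>\<surd>n (bernstein F m x - F x) \<rightarrow> \<lambda> B(x)\<close> when \<open>\<surd>n / m \<rightarrow> \<lambda>\<close>.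
\<close>

section \<open>Bernstein weights on the simplex\<close>

lemma norm1_idx_minus_axis:
  fixes k :: "nat^'d::finite"
  assumes "1 \<le> k $ i"
  shows "norm1_idx (k - axis i 1) = norm1_idx k - 1" and "1 \<le> norm1_idx k"
proof -
  have "norm1_idx k = k $ i + (\<Sum>j\<in>UNIV-{i}. k $ j)"
    unfolding norm1_idx_def by (simp add: sum.remove[of UNIV i])
  moreover have "norm1_idx (k - axis i 1) = (k $ i - 1) + (\<Sum>j\<in>UNIV-{i}. k $ j)"
    unfolding norm1_idx_def by (simp add: sum.remove[of UNIV i] axis_def)
  ultimately show "norm1_idx (k - axis i 1) = norm1_idx k - 1" "1 \<le> norm1_idx k"
    using assms by auto
qed

lemma norm1_idx_plus_axis: "norm1_idx (k + axis i 1) = norm1_idx (k::nat^'d::finite) + 1"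
proof -
  have "norm1_idx k = k $ i + (\<Sum>j\<in>UNIV-{i}. k $ j)"
    unfolding norm1_idx_def by (simp add: sum.remove[of UNIV i])
  moreover have "norm1_idx (k + axis i 1) = (k $ i + 1) + (\<Sum>j\<in>UNIV-{i}. k $ j)"
    unfolding norm1_idx_def by (simp add: sum.remove[of UNIV i] axis_def)
  ultimately show ?thesis by simp
qed

lemma prod_minus_axis:
  fixes k :: "nat^'d::finite"
  assumes "k $ i = Suc j"
  shows "(\<Prod>l\<in>UNIV. f l ((k - axis i 1) $ l)) = f i j * (\<Prod>l\<in>UNIV-{i}. f l (k $ l))"
  using assms by (simp add: prod.remove[of UNIV i] axis_def)

lemma bern_P_lower_degree:
  fixes k :: "nat^'d::finite"
  assumes "norm1_idx k \<le> m"
  shows "real (Suc m) * ((1 - l1norm x) * bern_P k m x) = real (Suc m - norm1_idx k) * bern_P k (Suc m) x"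
proof -
  obtain a where a: "m - norm1_idx k = a" "Suc m - norm1_idx k = Suc a" using assms by auto
  have regroup: "n \<noteq> 0 \<Longrightarrow> c * (L * (f / (g * D) * P * X)) = n * (c * f / (n * g * D) * (L * P) * X)"
    for n c f g D L P X :: real
    by (cases "g * D = 0") (simp_all add: field_simps)
  show ?thesis
    unfolding bern_P_def a fact_Suc power_Suc by (rule regroup) simp
qed

lemma bern_P_lower_index:
  fixes k :: "nat^'d::finite"
  assumes i: "1 \<le> k $ i" and k: "norm1_idx k \<le> Suc m"
  shows "real (Suc m) * (x $ i * bern_P (k - axis i 1) m x) = real (k $ i) * bern_P k (Suc m) x"
proof -
  have n: "m - norm1_idx (k - axis i 1) = Suc m - norm1_idx k"
    using norm1_idx_minus_axis[OF i] k by simp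
  obtain j where j: "k $ i = Suc j" using i by (cases "k $ i") auto
  have fact: "real (k $ i) * (\<Prod>j\<in>UNIV. fact ((k - axis i 1) $ j)) = (\<Prod>j\<in>UNIV. fact (k $ j) :: real)"
    unfolding prod_minus_axis[OF j, of "\<lambda>_ n. fact n"] by (simp add: prod.remove[of UNIV i] j)
  have pow: "x $ i * (\<Prod>j\<in>UNIV. (x $ j) ^ ((k - axis i 1) $ j)) = (\<Prod>j\<in>UNIV. (x $ j) ^ (k $ j))"
    unfolding prod_minus_axis[OF j, of "\<lambda>l n. (x $ l) ^ n"] by (simp add: prod.remove[of UNIV i] j)
  have regroup: "n \<noteq> 0 \<Longrightarrow> c * (y * (f / (g * D) * P * X)) = n * (c * f / (g * (n * D)) * P * (y * X))"
    for n c y f g D P X :: real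
    by (cases "g * D = 0") (simp_all add: field_simps)
  show ?thesis
    unfolding bern_P_def n fact[symmetric] pow[symmetric] fact_Suc by (rule regroup) (use i in simp)
qed

lemma bern_P_Suc:
  fixes k :: "nat^'d::finite"
  assumes k: "norm1_idx k \<le> Suc m"
  shows "bern_P k (Suc m) x = (if norm1_idx k \<le> m then (1 - l1norm x) * bern_P k m x else 0)
     + (\<Sum>i\<in>UNIV. if 1 \<le> k $ i then x $ i * bern_P (k - axis i 1) m x else 0)"
proof -
  have first: "real (Suc m) * (if norm1_idx k \<le> m then (1 - l1norm x) * bern_P k m x else 0)
      = real (Suc m - norm1_idx k) * bern_P k (Suc m) x"
    using bern_P_lower_degree[of k m x] k by (cases "norm1_idx k \<le> m") auto
  have coord: "real (Suc m) * (if 1 \<le> k $ i then x $ i * bern_P (k - axis i 1) m x else 0)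
      = real (k $ i) * bern_P k (Suc m) x" for i
    using bern_P_lower_index[of k i m x] k by (cases "1 \<le> k $ i") auto
  have "real (Suc m) * ((if norm1_idx k \<le> m then (1 - l1norm x) * bern_P k m x else 0)
      + (\<Sum>i\<in>UNIV. if 1 \<le> k $ i then x $ i * bern_P (k - axis i 1) m x else 0))
      = (real (Suc m - norm1_idx k) + real (norm1_idx k)) * bern_P k (Suc m) x"
    unfolding distrib_left first sum_distrib_left coord
    by (simp add: norm1_idx_def sum_distrib_right distrib_right)
  also have "\<dots> = real (Suc m) * bern_P k (Suc m) x"
    using k by (simp add: of_nat_diff)
  finally show ?thesis by simp
qed

text \<open>\<open>bern_sum m G x\<close> is the mean of \<open>G\<close> under the multinomial distribution with \<open>m\<close>
  trials and cell probabilities \<open>x $ 1, \<dots>, x $ d, 1 - l1norm x\<close>.\<close>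

definition bern_sum :: "nat \<Rightarrow> (nat^'d::finite \<Rightarrow> real) \<Rightarrow> real^'d \<Rightarrow> real" where
  "bern_sum m G x = (\<Sum>k\<in>multi_idx m. G k * bern_P k m x)"

lemma multi_idx_eq: "multi_idx m = {k. norm1_idx k \<le> m}"
  unfolding multi_idx_def norm1_idx_def by simp

lemma finite_multi_idx: "finite (multi_idx m :: (nat^'d::finite) set)"
proof -
  have "multi_idx m \<subseteq> (vec_lambda ` (PiE UNIV (\<lambda>_. {..m})) :: (nat^'d) set)"
  proof
    fix k :: "nat^'d" assume "k \<in> multi_idx m"
    then have "k $ i \<le> m" for i
      using member_le_sum[of i UNIV "\<lambda>i. k $ i"] by (simp add: multi_idx_def)
    then have "vec_nth k \<in> PiE UNIV (\<lambda>_. {..m})" by auto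
    then show "k \<in> vec_lambda ` (PiE UNIV (\<lambda>_. {..m}))" by (metis image_eqI vec_nth_inverse)
  qed
  moreover have "finite (vec_lambda ` (PiE UNIV (\<lambda>_. {..m})) :: (nat^'d) set)"
    by (intro finite_imageI finite_PiE) auto
  ultimately show ?thesis by (rule finite_subset)
qed

lemma multi_idx_Suc_shift:
  "multi_idx (Suc m) \<inter> {k. 1 \<le> k $ i} = (\<lambda>k. k + axis i 1) ` (multi_idx m :: (nat^'d::finite) set)"
proof (intro set_eqI iffI)
  fix k :: "nat^'d" assume "k \<in> multi_idx (Suc m) \<inter> {k. 1 \<le> k $ i}"
  then have k: "norm1_idx k \<le> Suc m" "1 \<le> k $ i" by (auto simp: multi_idx_eq)
  then have "k - axis i 1 \<in> multi_idx m"
    using norm1_idx_minus_axis[OF k(2)] by (simp add: multi_idx_eq)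
  moreover have "k = (k - axis i 1) + axis i 1" using k(2) by (simp add: vec_eq_iff axis_def)
  ultimately show "k \<in> (\<lambda>k. k + axis i 1) ` multi_idx m" by blast
next
  fix k :: "nat^'d" assume "k \<in> (\<lambda>k. k + axis i 1) ` multi_idx m"
  then obtain l where "l \<in> multi_idx m" "k = l + axis i 1" by blast
  then show "k \<in> multi_idx (Suc m) \<inter> {k. 1 \<le> k $ i}"
    using norm1_idx_plus_axis[of l i] by (simp add: multi_idx_eq)
qed

text \<open>Conditioning on the outcome of the last of \<open>m + 1\<close> trials.\<close>

lemma bern_sum_Suc:
  fixes x :: "real^'d::finite"
  shows "bern_sum (Suc m) G x
    = (1 - l1norm x) * bern_sum m G x + (\<Sum>i\<in>UNIV. x $ i * bern_sum m (\<lambda>k. G (k + axis i 1)) x)"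
proof -
  let ?I = "multi_idx (Suc m) :: (nat^'d) set"
  have shift: "(\<Sum>k\<in>?I. if 1 \<le> k $ i then G k * bern_P (k - axis i 1) m x else 0)
      = bern_sum m (\<lambda>k. G (k + axis i 1)) x" for i
  proof -
    have "inj_on (\<lambda>k. k + axis i 1) (multi_idx m :: (nat^'d) set)"
      by (auto simp: inj_on_def)
    then show ?thesis
      unfolding sum.If_cases[OF finite_multi_idx] multi_idx_Suc_shift bern_sum_def
      by (simp add: sum.reindex)
  qed
  have lower: "(\<Sum>k\<in>?I. if norm1_idx k \<le> m then G k * bern_P k m x else 0) = bern_sum m G x"
  proof -
    have "?I \<inter> {k. norm1_idx k \<le> m} = multi_idx m" by (auto simp: multi_idx_eq)
    then show ?thesis unfolding sum.If_cases[OF finite_multi_idx] bern_sum_def by simp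
  qed
  have "bern_sum (Suc m) G x = (\<Sum>k\<in>?I. (1 - l1norm x) * (if norm1_idx k \<le> m then G k * bern_P k m x else 0)
      + (\<Sum>i\<in>UNIV. x $ i * (if 1 \<le> k $ i then G k * bern_P (k - axis i 1) m x else 0)))"
    unfolding bern_sum_def
    by (intro sum.cong refl) (auto simp: bern_P_Suc multi_idx_eq distrib_left sum_distrib_left intro!: sum.cong)
  also have "\<dots> = (1 - l1norm x) * bern_sum m G x + (\<Sum>i\<in>UNIV. x $ i * bern_sum m (\<lambda>k. G (k + axis i 1)) x)"
    unfolding sum.distrib sum.swap[of _ UNIV ?I] sum_distrib_left[symmetric] lower shift ..
  finally show ?thesis .
qed

lemma bern_sum_add: "bern_sum m (\<lambda>k. G k + H k) x = bern_sum m G x + bern_sum m H x"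
  unfolding bern_sum_def by (simp add: distrib_right sum.distrib)

lemma bern_sum_diff: "bern_sum m (\<lambda>k. G k - H k) x = bern_sum m G x - bern_sum m H x"
  unfolding bern_sum_def by (simp add: left_diff_distrib sum_subtractf)

lemma bern_sum_cmult: "bern_sum m (\<lambda>k. c * G k) x = c * bern_sum m G x"
  unfolding bern_sum_def by (simp add: sum_distrib_left mult.assoc)

lemma bern_sum_sum: "bern_sum m (\<lambda>k. \<Sum>i\<in>I. G i k) x = (\<Sum>i\<in>I. bern_sum m (G i) x)"
  unfolding bern_sum_def by (simp add: sum_distrib_right sum.swap[of _ I])

lemma bern_sum_cong: "(\<And>k. k \<in> multi_idx m \<Longrightarrow> G k = H k) \<Longrightarrow> bern_sum m G x = bern_sum m H x"
  unfolding bern_sum_def by simp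

lemma bern_sum_0: "bern_sum 0 G (x::real^'d::finite) = G 0"
proof -
  have "multi_idx 0 = {0 :: nat^'d}" by (auto simp: multi_idx_def vec_eq_iff)
  then show ?thesis unfolding bern_sum_def bern_P_def norm1_idx_def by simp
qed

section \<open>Moments of the multinomial weights\<close>

locale nonneg_point =
  fixes x :: "real^'d::finite"
  assumes nonneg: "\<And>i. 0 \<le> x $ i"
begin

lemma l1norm_eq_sum: "l1norm x = (\<Sum>i\<in>UNIV. x $ i)"
  unfolding l1norm_def using nonneg by simp

lemma bern_sum_const: "bern_sum m (\<lambda>k. c) x = c"
proof -
  have "bern_sum m (\<lambda>k. 1) x = 1"
    by (induction m) (simp_all add: bern_sum_0 bern_sum_Suc l1norm_eq_sum)
  then show ?thesis using bern_sum_cmult[of m c "\<lambda>k. 1" x] by simp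
qed

lemma bern_sum_Suc_coord:
  "bern_sum (Suc m) (\<lambda>k. g (k $ i)) x = bern_sum m (\<lambda>k. (1 - x $ i) * g (k $ i) + x $ i * g (k $ i + 1)) x"
proof -
  have "(\<Sum>l\<in>UNIV. x $ l * bern_sum m (\<lambda>k. g ((k + axis l 1) $ i)) x)
      = (\<Sum>l\<in>UNIV. if l = i then x $ i * bern_sum m (\<lambda>k. g (k $ i + 1)) x
                                else x $ l * bern_sum m (\<lambda>k. g (k $ i)) x)"
    by (intro sum.cong refl) (auto simp: axis_def)
  also have "\<dots> = x $ i * bern_sum m (\<lambda>k. g (k $ i + 1)) x + (l1norm x - x $ i) * bern_sum m (\<lambda>k. g (k $ i)) x"
    by (simp add: sum.remove[of UNIV i] sum_distrib_right l1norm_eq_sum)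
  finally show ?thesis
    unfolding bern_sum_Suc bern_sum_add bern_sum_cmult by (simp add: algebra_simps)
qed

lemma bern_sum_coord: "bern_sum m (\<lambda>k. real (k $ i)) x = real m * x $ i"
proof (induction m)
  case (Suc m)
  have "bern_sum (Suc m) (\<lambda>k. real (k $ i)) x = bern_sum m (\<lambda>k. real (k $ i) + x $ i) x"
    by (subst bern_sum_Suc_coord) (simp add: algebra_simps)
  then show ?case using Suc by (simp add: bern_sum_add bern_sum_const algebra_simps)
qed (simp add: bern_sum_0)

lemma bern_sum_centered_coord: "bern_sum m (\<lambda>k. real (k $ i) - real m * x $ i) x = 0"
  by (simp add: bern_sum_diff bern_sum_coord bern_sum_const)

lemma bern_sum_centered_coord_sq:
  "bern_sum m (\<lambda>k. (real (k $ i) - real m * x $ i)^2) x = real m * x $ i * (1 - x $ i)"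
proof (induction m)
  case (Suc m)
  let ?p = "x $ i"
  let ?u = "\<lambda>k. real (k $ i) - real m * ?p"
  have "bern_sum (Suc m) (\<lambda>k. (real (k $ i) - real (Suc m) * ?p)^2) x
      = bern_sum m (\<lambda>k. (1 - ?p) * (?u k - ?p)^2 + ?p * (?u k + 1 - ?p)^2) x"
    by (subst bern_sum_Suc_coord) (simp add: algebra_simps)
  also have "\<dots> = bern_sum m (\<lambda>k. (?u k)^2 + ?p * (1 - ?p)) x"
    by (simp add: power2_eq_square algebra_simps)
  also have "\<dots> = real m * ?p * (1 - ?p) + ?p * (1 - ?p)"
    using Suc by (simp only: bern_sum_add bern_sum_const)
  finally show ?case by (simp add: algebra_simps)
qed (simp add: bern_sum_0)

lemma bern_sum_centered_coord_pow4_le: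
  assumes le1: "x $ i \<le> 1"
  shows "bern_sum m (\<lambda>k. (real (k $ i) - real m * x $ i)^4) x \<le> 3 * (real m)^2"
proof (induction m)
  case (Suc m)
  let ?p = "x $ i"
  let ?u = "\<lambda>k. real (k $ i) - real m * ?p"
  have p: "0 \<le> ?p" "?p \<le> 1" using nonneg le1 .
  have var: "0 \<le> ?p * (1 - ?p)" "?p * (1 - ?p) \<le> 1" using p by (auto simp: mult_le_one)
  have "?p^3 \<le> ?p" "(1 - ?p)^3 \<le> 1 - ?p"
    using power_decreasing[of 1 3 ?p] power_decreasing[of 1 3 "1 - ?p"] p by auto
  then have cubes: "0 \<le> ?p^3 + (1 - ?p)^3" "?p^3 + (1 - ?p)^3 \<le> 1" using p by simp_all
  have "bern_sum (Suc m) (\<lambda>k. (real (k $ i) - real (Suc m) * ?p)^4) x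
      = bern_sum m (\<lambda>k. (1 - ?p) * (?u k - ?p)^4 + ?p * (?u k + 1 - ?p)^4) x"
    by (subst bern_sum_Suc_coord) (simp add: algebra_simps)
  also have "\<dots> = bern_sum m (\<lambda>k. (?u k)^4 + (6 * ?p * (1 - ?p)) * (?u k)^2
        + (4 * ?p * (1 - ?p) * (1 - 2 * ?p)) * ?u k + ?p * (1 - ?p) * (?p^3 + (1 - ?p)^3)) x"
    by (simp add: power2_eq_square power3_eq_cube power4_eq_xxxx algebra_simps)
  also have "\<dots> = bern_sum m (\<lambda>k. (?u k)^4) x + 6 * real m * (?p * (1 - ?p))^2
        + ?p * (1 - ?p) * (?p^3 + (1 - ?p)^3)"
    by (simp only: bern_sum_add bern_sum_cmult bern_sum_const bern_sum_centered_coord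
        bern_sum_centered_coord_sq) (simp add: power2_eq_square)
  also have "\<dots> \<le> 3 * (real m)^2 + 6 * real m * 1 + 1 * 1"
    using Suc var cubes by (intro add_mono mult_left_mono mult_mono power_le_one) auto
  also have "\<dots> \<le> 3 * (real (Suc m))^2" by (simp add: power2_eq_square algebra_simps)
  finally show ?case .
qed (simp add: bern_sum_0)

lemma bern_sum_coord_mult:
  assumes "i \<noteq> j"
  shows "bern_sum m (\<lambda>k. real (k $ i) * real (k $ j)) x = real m * (real m - 1) * x $ i * x $ j"
proof (induction m)
  case (Suc m)
  have shifted: "bern_sum m (\<lambda>k. real ((k + axis l 1) $ i) * real ((k + axis l 1) $ j)) x
     = real m * (real m - 1) * x $ i * x $ j
       + (if i = l then real m * x $ j else 0) + (if j = l then real m * x $ i else 0)" for l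
  proof -
    have "bern_sum m (\<lambda>k. real ((k + axis l 1) $ i) * real ((k + axis l 1) $ j)) x
       = bern_sum m (\<lambda>k. real (k $ i) * real (k $ j) + (if i = l then 1 else 0) * real (k $ j)
           + (if j = l then 1 else 0) * real (k $ i)) x"
      using assms by (intro bern_sum_cong) (auto simp: axis_def algebra_simps)
    then show ?thesis using Suc by (simp add: bern_sum_add bern_sum_cmult bern_sum_coord)
  qed
  have "(\<Sum>l\<in>UNIV. x $ l * bern_sum m (\<lambda>k. real ((k + axis l 1) $ i) * real ((k + axis l 1) $ j)) x)
      = l1norm x * (real m * (real m - 1) * x $ i * x $ j) + x $ i * (real m * x $ j) + x $ j * (real m * x $ i)"
  proof -
    have pick: "(\<Sum>l\<in>UNIV. x $ l * (if p = l then a else 0)) = x $ p * a" for p a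
      by (simp add: if_distrib cong: if_cong)
    show ?thesis
      unfolding shifted l1norm_eq_sum by (simp add: distrib_left sum.distrib sum_distrib_right pick)
  qed
  then show ?case
    unfolding bern_sum_Suc Suc l1norm_eq_sum by (simp add: algebra_simps)
qed (simp add: bern_sum_0)

end

definition grid_point :: "nat \<Rightarrow> nat^'d::finite \<Rightarrow> real^'d" where
  "grid_point m k = (\<chi> i. real (k $ i) / real m)"

lemma bernstein_eq_bern_sum: "bernstein G m x = bern_sum m (\<lambda>k. G (grid_point m k)) x"
  by (simp add: bernstein_def bern_sum_def grid_point_def)

lemma grid_point_in_simplexS:
  assumes "m > 0" "k \<in> multi_idx m"
  shows "grid_point m k \<in> simplexS"
proof -
  have s: "(\<Sum>i\<in>UNIV. k $ i) \<le> m" using assms(2) by (simp add: multi_idx_def)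
  have "k $ i \<le> m" for i using member_le_sum[of i UNIV "\<lambda>i. k $ i"] s by simp
  moreover have "l1norm (grid_point m k) = real (\<Sum>i\<in>UNIV. k $ i) / real m"
    unfolding l1norm_def grid_point_def by (simp add: sum_divide_distrib)
  ultimately show ?thesis
    using s assms(1)
    by (auto simp: simplexS_def grid_point_def divide_le_eq_1 of_nat_sum[symmetric] simp del: of_nat_sum)
qed

lemma norm_sq_vec: "(norm (v :: real^'d))^2 = (\<Sum>i\<in>UNIV. (v $ i)^2)"
  unfolding norm_vec_def L2_set_def by (simp add: sum_nonneg)

context nonneg_point
begin

lemma grid_point_diff: "m > 0 \<Longrightarrow> grid_point m k $ i - x $ i = (real (k $ i) - real m * x $ i) / real m"
  by (simp add: grid_point_def field_simps)

lemma bern_sum_grid_diff: "m > 0 \<Longrightarrow> bern_sum m (\<lambda>k. grid_point m k $ i - x $ i) x = 0"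
  using bern_sum_cmult[of m "1 / real m" "\<lambda>k. real (k $ i) - real m * x $ i" x]
  by (simp add: grid_point_diff bern_sum_centered_coord)

lemma bern_sum_grid_diff_mult:
  assumes m: "m > 0"
  shows "bern_sum m (\<lambda>k. (grid_point m k $ i - x $ i) * (grid_point m k $ j - x $ j)) x
    = ((if i = j then x $ i else 0) - x $ i * x $ j) / real m"
proof -
  let ?u = "\<lambda>k i. real (k $ i) - real m * x $ i"
  have "bern_sum m (\<lambda>k. ?u k i * ?u k j) x = real m * ((if i = j then x $ i else 0) - x $ i * x $ j)"
  proof (cases "i = j")
    case True
    then show ?thesis using bern_sum_centered_coord_sq[of m i] by (simp add: power2_eq_square algebra_simps)
  next
    case False
    have "bern_sum m (\<lambda>k. ?u k i * ?u k j) x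
      = bern_sum m (\<lambda>k. real (k $ i) * real (k $ j) - (real m * x $ j) * real (k $ i)
          - (real m * x $ i) * real (k $ j) + real m * x $ i * (real m * x $ j)) x"
      by (simp add: algebra_simps)
    also have "\<dots> = real m * ((if i = j then x $ i else 0) - x $ i * x $ j)"
      unfolding bern_sum_add bern_sum_diff bern_sum_cmult bern_sum_const
      using False by (simp add: bern_sum_coord_mult bern_sum_coord algebra_simps)
    finally show ?thesis .
  qed
  moreover have "bern_sum m (\<lambda>k. (grid_point m k $ i - x $ i) * (grid_point m k $ j - x $ j)) x
      = bern_sum m (\<lambda>k. ?u k i * ?u k j) x / (real m)^2"
    using bern_sum_cmult[of m "1 / (real m)^2" "\<lambda>k. ?u k i * ?u k j" x] m
    by (simp add: grid_point_diff power2_eq_square)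
  ultimately show ?thesis using m by (simp add: power2_eq_square)
qed

lemma bern_sum_grid_dist_sq_le:
  assumes m: "m > 0"
  shows "bern_sum m (\<lambda>k. (norm (grid_point m k - x))^2) x \<le> real CARD('d) / real m"
proof -
  have "bern_sum m (\<lambda>k. (norm (grid_point m k - x))^2) x = (\<Sum>i\<in>UNIV. (x $ i - x $ i * x $ i) / real m)"
    unfolding norm_sq_vec bern_sum_sum
    unfolding vector_minus_component power2_eq_square bern_sum_grid_diff_mult[OF m] by simp
  also have "\<dots> \<le> (\<Sum>i\<in>(UNIV::'d set). 1 / real m)"
  proof (intro sum_mono divide_right_mono)
    show "x $ i - x $ i * x $ i \<le> 1" for i
      using sum_squares_ge_zero[of "x $ i - 1/2" 0] by (simp add: algebra_simps power2_eq_square)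
  qed simp
  finally show ?thesis by simp
qed

end

lemma tendsto_zero_if_eps_bound:
  fixes a :: "nat \<Rightarrow> real"
  assumes bound: "\<And>e. e > 0 \<Longrightarrow> \<exists>c. \<forall>n>0. \<bar>a n\<bar> \<le> e + c / real n"
  shows "a \<longlonglongrightarrow> 0"
proof (rule LIMSEQ_I)
  fix r :: real assume r: "r > 0"
  obtain c where c: "\<And>n. n > 0 \<Longrightarrow> \<bar>a n\<bar> \<le> r / 2 + c / real n"
    using bound[of "r / 2"] r by auto
  obtain N :: nat where N: "2 * \<bar>c\<bar> / r < real N" using reals_Archimedean2 by blast
  have "\<bar>a n\<bar> < r" if n: "n \<ge> Suc N" for n
  proof -
    have "r * real N \<le> r * real n" using n r by (intro mult_left_mono) auto
    moreover have "2 * \<bar>c\<bar> < r * real N" using N r by (simp add: field_simps)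
    ultimately have "2 * \<bar>c\<bar> < r * real n" by linarith
    then have "c / real n < r / 2" using n by (simp add: field_simps)
    then show ?thesis using c[of n] n by linarith
  qed
  then show "\<exists>N. \<forall>n\<ge>N. norm (a n - 0) < r" by auto
qed

text \<open>The near/far split of Bernstein's proof of the Weierstrass approximation theorem.\<close>

lemma le_near_far:
  fixes a t w d e K :: real
  assumes far: "a \<le> K * w" and near: "t < d \<Longrightarrow> a \<le> e * w"
    and "0 \<le> e" "0 \<le> K" "0 \<le> w" "0 < d"
  shows "a \<le> e * w + K / d^2 * w * t^2"
proof (cases "t < d")
  case True
  then show ?thesis using near assms(3-6) by (simp add: add_increasing2)
next
  case False
  then have "d^2 \<le> t^2" using \<open>0 < d\<close> by (intro power_mono) auto
  then have "K * w \<le> K / d^2 * w * t^2" using assms(3-6) by (simp add: field_simps mult_left_mono)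
  then show ?thesis using far assms(3-5) by (simp add: add_increasing)
qed

locale simplex_point = nonneg_point x for x :: "real^'d::finite" +
  assumes l1norm_le_1: "l1norm x \<le> 1"
begin

lemma coord_le_1: "x $ i \<le> 1"
proof -
  have "x $ i \<le> (\<Sum>j\<in>UNIV. x $ j)" using nonneg by (intro member_le_sum) auto
  then show ?thesis using l1norm_le_1 l1norm_eq_sum by simp
qed

lemma in_simplexS: "x \<in> simplexS"
  unfolding simplexS_def using nonneg coord_le_1 l1norm_le_1 by auto

lemma bern_sum_mono: "(\<And>k. k \<in> multi_idx m \<Longrightarrow> G k \<le> H k) \<Longrightarrow> bern_sum m G x \<le> bern_sum m H x"
proof -
  have "0 \<le> bern_P k m x" for k
    unfolding bern_P_def using l1norm_le_1 nonneg
    by (intro mult_nonneg_nonneg prod_nonneg zero_le_power divide_nonneg_nonneg) auto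
  then show "(\<And>k. k \<in> multi_idx m \<Longrightarrow> G k \<le> H k) \<Longrightarrow> bern_sum m G x \<le> bern_sum m H x"
    unfolding bern_sum_def by (intro sum_mono mult_right_mono) auto
qed

lemma bern_sum_nonneg: "(\<And>k. k \<in> multi_idx m \<Longrightarrow> 0 \<le> G k) \<Longrightarrow> 0 \<le> bern_sum m G x"
  using bern_sum_mono[of m "\<lambda>_. 0" G] bern_sum_const[of m 0] by simp

lemma abs_bern_sum_le: "\<bar>bern_sum m G x\<bar> \<le> bern_sum m (\<lambda>k. \<bar>G k\<bar>) x"
  using bern_sum_mono[of m G "\<lambda>k. \<bar>G k\<bar>"] bern_sum_mono[of m "\<lambda>k. - G k" "\<lambda>k. \<bar>G k\<bar>"]
    bern_sum_cmult[of m "-1" G x] by fastforce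

lemma bern_sum_grid_dist_pow4_le:
  assumes m: "m > 0"
  shows "bern_sum m (\<lambda>k. (norm (grid_point m k - x))^4) x \<le> 3 * (real CARD('d))^2 / (real m)^2"
proof -
  let ?c = "real CARD('d)"
  have pointwise: "(norm (grid_point m k - x))^4 \<le> ?c * (\<Sum>i\<in>UNIV. (grid_point m k $ i - x $ i)^4)" for k
  proof -
    have "(norm (grid_point m k - x))^4 = (\<Sum>i\<in>UNIV. (grid_point m k $ i - x $ i)^2)^2"
      unfolding vector_minus_component[symmetric] norm_sq_vec[symmetric] by simp
    also have "\<dots> \<le> ?c * (\<Sum>i\<in>UNIV. ((grid_point m k $ i - x $ i)^2)^2)"
      using sum_squared_le_sum_of_squares[of "\<lambda>i. (grid_point m k $ i - x $ i)^2" "UNIV :: 'd set"]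
      by (simp add: mult.commute)
    finally show ?thesis by simp
  qed
  have "bern_sum m (\<lambda>k. (norm (grid_point m k - x))^4) x
      \<le> ?c * (\<Sum>i\<in>UNIV. bern_sum m (\<lambda>k. (grid_point m k $ i - x $ i)^4) x)"
    unfolding bern_sum_sum[symmetric] bern_sum_cmult[symmetric] by (rule bern_sum_mono) (rule pointwise)
  also have "\<dots> \<le> ?c * (\<Sum>i\<in>(UNIV::'d set). 3 / (real m)^2)"
  proof (intro mult_left_mono sum_mono)
    fix i
    have "bern_sum m (\<lambda>k. (grid_point m k $ i - x $ i)^4) x
        = bern_sum m (\<lambda>k. (real (k $ i) - real m * x $ i)^4) x / (real m)^4"
      using m bern_sum_cmult[of m "1 / (real m)^4" "\<lambda>k. (real (k $ i) - real m * x $ i)^4" x]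
      by (simp add: grid_point_diff power_divide)
    also have "\<dots> \<le> 3 * (real m)^2 / (real m)^4"
      using bern_sum_centered_coord_pow4_le[OF coord_le_1] by (simp add: divide_right_mono)
    also have "\<dots> = 3 / (real m)^2" using m by (simp add: field_simps power2_eq_square power4_eq_xxxx)
    finally show "bern_sum m (\<lambda>k. (grid_point m k $ i - x $ i)^4) x \<le> 3 / (real m)^2" .
  qed simp
  also have "\<dots> = 3 * ?c^2 / (real m)^2" by (simp add: power2_eq_square)
  finally show ?thesis .
qed

lemma bern_sum_abs_grid_tendsto_0:
  assumes bounded: "\<And>y. y \<in> simplexS \<Longrightarrow> \<bar>g y\<bar> \<le> K"
    and vanish: "\<And>e. e > 0 \<Longrightarrow> \<exists>d>0. \<forall>y\<in>simplexS. norm (y - x) < d \<longrightarrow> \<bar>g y\<bar> \<le> e"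
  shows "(\<lambda>m. bern_sum m (\<lambda>k. \<bar>g (grid_point m k)\<bar>) x) \<longlonglongrightarrow> 0"
proof (rule tendsto_zero_if_eps_bound)
  fix e :: real assume e: "e > 0"
  obtain d where d: "d > 0" "\<And>y. y \<in> simplexS \<Longrightarrow> norm (y - x) < d \<Longrightarrow> \<bar>g y\<bar> \<le> e"
    using vanish[OF e] by auto
  have K: "0 \<le> K" using bounded[OF in_simplexS] by simp
  have "\<bar>bern_sum m (\<lambda>k. \<bar>g (grid_point m k)\<bar>) x\<bar> \<le> e + K * real CARD('d) / d^2 / real m"
    if m: "m > 0" for m
  proof -
    have "\<bar>g (grid_point m k)\<bar> \<le> e * 1 + K / d^2 * 1 * (norm (grid_point m k - x))^2"
      if "k \<in> multi_idx m" for k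
      using grid_point_in_simplexS[OF m that] bounded d(2) e K d(1) by (intro le_near_far) auto
    then have "bern_sum m (\<lambda>k. \<bar>g (grid_point m k)\<bar>) x
        \<le> bern_sum m (\<lambda>k. e * 1 + K / d^2 * 1 * (norm (grid_point m k - x))^2) x"
      by (rule bern_sum_mono)
    also have "\<dots> \<le> e + K / d^2 * (real CARD('d) / real m)"
      unfolding bern_sum_add bern_sum_cmult bern_sum_const mult_1_right
      using divide_right_mono[OF mult_left_mono[OF bern_sum_grid_dist_sq_le[OF m] K], of "d^2"] by (simp add: mult.commute)
    finally show ?thesis using bern_sum_nonneg[of m "\<lambda>k. \<bar>g (grid_point m k)\<bar>"] by simp
  qed
  then show "\<exists>c. \<forall>m>0. \<bar>bern_sum m (\<lambda>k. \<bar>g (grid_point m k)\<bar>) x\<bar> \<le> e + c / real m" by blast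
qed

lemma bern_sum_abs_rem_grid_tendsto_0:
  assumes bounded: "\<And>y. y \<in> simplexS \<Longrightarrow> \<bar>r y\<bar> \<le> C * (norm (y - x))^2"
    and small: "\<And>e. e > 0 \<Longrightarrow> \<exists>d>0. \<forall>y\<in>simplexS. norm (y - x) < d \<longrightarrow> \<bar>r y\<bar> \<le> e * (norm (y - x))^2"
  shows "(\<lambda>m. real m * bern_sum m (\<lambda>k. \<bar>r (grid_point m k)\<bar>) x) \<longlonglongrightarrow> 0"
proof (rule tendsto_zero_if_eps_bound)
  fix e :: real assume e: "e > 0"
  define c where "c = real CARD('d)"
  have c: "c > 0" unfolding c_def by simp
  obtain d where d: "d > 0" "\<And>y. y \<in> simplexS \<Longrightarrow> norm (y - x) < d \<Longrightarrow> \<bar>r y\<bar> \<le> e / c * (norm (y - x))^2"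
    using small[of "e / c"] e c by auto
  define K where "K = max C 0"
  have K: "0 \<le> K" "\<And>y. y \<in> simplexS \<Longrightarrow> \<bar>r y\<bar> \<le> K * (norm (y - x))^2"
  proof -
    show "0 \<le> K" unfolding K_def by simp
    fix y :: "real^'d" assume "y \<in> simplexS"
    moreover have "C * (norm (y - x))^2 \<le> K * (norm (y - x))^2" unfolding K_def by (intro mult_right_mono) auto
    ultimately show "\<bar>r y\<bar> \<le> K * (norm (y - x))^2" using bounded by fastforce
  qed
  have "\<bar>real m * bern_sum m (\<lambda>k. \<bar>r (grid_point m k)\<bar>) x\<bar> \<le> e + 3 * K * c^2 / d^2 / real m"
    if m: "m > 0" for m
  proof -
    have "\<bar>r (grid_point m k)\<bar> \<le> e / c * (norm (grid_point m k - x))^2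
        + K / d^2 * (norm (grid_point m k - x))^2 * (norm (grid_point m k - x))^2"
      if "k \<in> multi_idx m" for k
      using grid_point_in_simplexS[OF m that] K d e c by (intro le_near_far) auto
    then have "bern_sum m (\<lambda>k. \<bar>r (grid_point m k)\<bar>) x
        \<le> bern_sum m (\<lambda>k. e / c * (norm (grid_point m k - x))^2
              + K / d^2 * (norm (grid_point m k - x))^2 * (norm (grid_point m k - x))^2) x"
      by (rule bern_sum_mono)
    also have "\<dots> \<le> e / c * (c / real m) + K / d^2 * (3 * c^2 / (real m)^2)"
    proof -
      have "t^2 * t^2 = t^4" for t :: real by simp
      then show ?thesis
        unfolding bern_sum_add mult.assoc bern_sum_cmult
        using bern_sum_grid_dist_sq_le[OF m] bern_sum_grid_dist_pow4_le[OF m] K(1) e c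
        unfolding c_def[symmetric] by (intro add_mono mult_left_mono) auto
    qed
    finally have "real m * bern_sum m (\<lambda>k. \<bar>r (grid_point m k)\<bar>) x
        \<le> real m * (e / c * (c / real m) + K / d^2 * (3 * c^2 / (real m)^2))"
      by (rule mult_left_mono) simp
    also have "\<dots> = e + 3 * K * c^2 / d^2 / real m"
      using m c by (simp add: field_simps power2_eq_square)
    finally show ?thesis using bern_sum_nonneg[of m "\<lambda>k. \<bar>r (grid_point m k)\<bar>"] by simp
  qed
  then show "\<exists>c. \<forall>m>0. \<bar>real m * bern_sum m (\<lambda>k. \<bar>r (grid_point m k)\<bar>) x\<bar> \<le> e + c / real m" by blast
qed

end

section \<open>Taylor expansion and the bias\<close>

lemma convex_simplexS: "convex (simplexS :: (real^'d::finite) set)"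
proof (rule convexI)
  fix u v :: "real^'d" and a b :: real
  assume u: "u \<in> simplexS" and v: "v \<in> simplexS" and ab: "0 \<le> a" "0 \<le> b" "a + b = 1"
  have uv: "0 \<le> u $ i" "u $ i \<le> 1" "0 \<le> v $ i" "v $ i \<le> 1" for i
    using u v by (auto simp: simplexS_def)
  have comp: "0 \<le> a * u $ i + b * v $ i" "a * u $ i + b * v $ i \<le> 1" for i
    using convex_bound_le[of "u $ i" 1 "v $ i" a b] uv[of i] ab by auto
  have "(\<Sum>i\<in>UNIV. u $ i) \<le> 1" "(\<Sum>i\<in>UNIV. v $ i) \<le> 1"
    using u v uv by (auto simp: simplexS_def l1norm_def)
  then have "a * (\<Sum>i\<in>UNIV. u $ i) + b * (\<Sum>i\<in>UNIV. v $ i) \<le> 1"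
    using convex_bound_le ab by blast
  then have "l1norm (a *\<^sub>R u + b *\<^sub>R v) \<le> 1"
    unfolding l1norm_def using comp(1) by (simp add: sum.distrib sum_distrib_left)
  then show "a *\<^sub>R u + b *\<^sub>R v \<in> simplexS" using comp unfolding simplexS_def by auto
qed

lemma compact_simplexS: "compact (simplexS :: (real^'d::finite) set)"
proof -
  have "simplexS \<subseteq> cbox (0::real^'d) 1"
    by (auto simp: simplexS_def mem_box_cart)
  moreover have "simplexS = {y::real^'d. (\<forall>i. 0 \<le> y $ i \<and> y $ i \<le> 1) \<and> (\<Sum>i\<in>UNIV. \<bar>y $ i\<bar>) \<le> 1}"
    by (simp add: simplexS_def l1norm_def)
  moreover have "closed \<dots>"
    by (intro closed_Collect_conj closed_Collect_all closed_Collect_le continuous_intros)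
  ultimately show ?thesis
    by (metis bounded_cbox bounded_subset compact_eq_bounded_closed)
qed

lemma abs_quadratic_form_le:
  fixes A :: "real^'d^'d::finite" and h :: "real^'d"
  shows "\<bar>h \<bullet> (A *v h)\<bar> \<le> (real CARD('d))^2 * norm A * (norm h)^2"
proof -
  have "h \<bullet> (A *v h) = (\<Sum>i\<in>UNIV. \<Sum>j\<in>UNIV. h $ i * A $ i $ j * h $ j)"
    by (simp add: inner_vec_def matrix_vector_mult_def sum_distrib_left mult_ac)
  also have "\<bar>\<dots>\<bar> \<le> (\<Sum>i\<in>UNIV. \<Sum>j\<in>UNIV. \<bar>h $ i * A $ i $ j * h $ j\<bar>)"
    by (rule order_trans[OF sum_abs sum_mono]) (rule sum_abs)
  also have "\<dots> \<le> (\<Sum>i\<in>(UNIV::'d set). \<Sum>j\<in>(UNIV::'d set). norm h * norm A * norm h)"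
  proof (intro sum_mono)
    fix i j
    have "\<bar>A $ i $ j\<bar> \<le> norm A"
      using component_le_norm_cart[of "A $ i" j] Finite_Cartesian_Product.norm_nth_le[where x=A and i=i] by linarith
    then show "\<bar>h $ i * A $ i $ j * h $ j\<bar> \<le> norm h * norm A * norm h"
      unfolding abs_mult by (intro mult_mono component_le_norm_cart) auto
  qed
  also have "\<dots> = (real CARD('d))^2 * norm A * (norm h)^2" by (simp add: power2_eq_square)
  finally show ?thesis .
qed

lemma onorm_scale_le:
  assumes "\<bar>c\<bar> \<le> B"
  shows "onorm (\<lambda>u::real. u * c) \<le> B"
proof (rule onorm_le)
  fix u :: real
  have "\<bar>u\<bar> * \<bar>c\<bar> \<le> \<bar>u\<bar> * B" using assms by (intro mult_left_mono) auto
  then show "norm (u * c) \<le> B * norm u" by (simp add: abs_mult mult.commute)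
qed

lemma second_order_remainder_unit_interval:
  fixes f f' f'' :: "real \<Rightarrow> real"
  assumes f: "\<And>t. t \<in> {0..1} \<Longrightarrow> (f has_derivative (\<lambda>s. s * f' t)) (at t within {0..1})"
    and f': "\<And>t. t \<in> {0..1} \<Longrightarrow> (f' has_derivative (\<lambda>s. s * f'' t)) (at t within {0..1})"
    and B: "\<And>t. t \<in> {0..1} \<Longrightarrow> \<bar>f'' t - f'' 0\<bar> \<le> B"
  shows "\<bar>f 1 - f 0 - f' 0 - f'' 0 / 2\<bar> \<le> B"
proof -
  have B0: "0 \<le> B" using B[of 0] by simp
  define g where "g t = f' t - f' 0 - t * f'' 0" for t
  have g: "(g has_derivative (\<lambda>s. s * (f'' t - f'' 0))) (at t within {0..1})" if "t \<in> {0..1}" for t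
    unfolding g_def using f'[OF that] by (auto intro!: derivative_eq_intros simp: algebra_simps)
  have g_le: "\<bar>g t\<bar> \<le> B" if t: "t \<in> {0..1}" for t
  proof -
    have "norm (g t - g 0) \<le> B * norm (t - 0)"
      using t by (intro differentiable_bound[OF convex_real_interval(5) g] onorm_scale_le B) auto
    moreover have "B * t \<le> B" using B0 t by (simp add: mult_right_le_one_le)
    ultimately show ?thesis using t by (simp add: g_def)
  qed
  define h where "h t = f t - f 0 - t * f' 0 - t^2 / 2 * f'' 0" for t
  have h: "(h has_derivative (\<lambda>s. s * g t)) (at t within {0..1})" if "t \<in> {0..1}" for t
    unfolding h_def g_def using f[OF that]
    by (auto intro!: derivative_eq_intros simp: algebra_simps power2_eq_square)
  have "norm (h 1 - h 0) \<le> B * norm (1 - 0 :: real)"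
    by (intro differentiable_bound[OF convex_real_interval(5) h] onorm_scale_le g_le) auto
  then show ?thesis by (simp add: h_def)
qed

locale C2_on_simplex =
  fixes F :: "real^'d::finite \<Rightarrow> real" and DF :: "real^'d \<Rightarrow> real^'d" and D2F :: "real^'d \<Rightarrow> real^'d^'d"
  assumes has_derivative_F: "\<And>y. y \<in> simplexS \<Longrightarrow> (F has_derivative (\<lambda>h. DF y \<bullet> h)) (at y within simplexS)"
    and has_derivative_DF: "\<And>y. y \<in> simplexS \<Longrightarrow> (DF has_derivative (\<lambda>h. D2F y *v h)) (at y within simplexS)"
    and continuous_D2F: "continuous_on simplexS D2F"
begin

definition taylor_rem :: "real^'d \<Rightarrow> real^'d \<Rightarrow> real" where
  "taylor_rem x y = F y - F x - DF x \<bullet> (y - x) - (1/2) * ((y - x) \<bullet> (D2F x *v (y - x)))"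

lemma abs_taylor_rem_le:
  assumes x: "x \<in> simplexS" and y: "y \<in> simplexS"
    and osc: "\<And>z. z \<in> simplexS \<Longrightarrow> norm (z - x) \<le> norm (y - x) \<Longrightarrow> norm (D2F z - D2F x) \<le> \<eta>"
  shows "\<bar>taylor_rem x y\<bar> \<le> (real CARD('d))^2 * \<eta> * (norm (y - x))^2"
proof -
  define h where "h = y - x"
  define p where "p t = x + t *\<^sub>R h" for t :: real
  have p_in: "p t \<in> simplexS" if "t \<in> {0..1}" for t
  proof -
    have "p t = (1 - t) *\<^sub>R x + t *\<^sub>R y" unfolding p_def h_def by (simp add: algebra_simps)
    then show ?thesis using that convex_simplexS x y unfolding convex_def by auto
  qed
  then have p_img: "p ` {0..1} \<subseteq> simplexS" by auto
  have p: "(p has_derivative (\<lambda>s. s *\<^sub>R h)) (at t within {0..1})" for t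
    unfolding p_def by (auto intro!: derivative_eq_intros)
  have d1: "((\<lambda>t. F (p t)) has_derivative (\<lambda>s. s * (DF (p t) \<bullet> h))) (at t within {0..1})"
    if "t \<in> {0..1}" for t
    using has_derivative_in_compose2[OF has_derivative_F p_img that p] by (simp add: mult.commute)
  have d2: "((\<lambda>t. DF (p t) \<bullet> h) has_derivative (\<lambda>s. s * (h \<bullet> (D2F (p t) *v h)))) (at t within {0..1})"
    if "t \<in> {0..1}" for t
    using has_derivative_in_compose2[OF has_derivative_DF p_img that p]
    by (auto intro!: derivative_eq_intros simp: matrix_vector_mult_scaleR inner_commute)
  have osc_path: "\<bar>h \<bullet> (D2F (p t) *v h) - h \<bullet> (D2F (p 0) *v h)\<bar> \<le> (real CARD('d))^2 * \<eta> * (norm h)^2"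
    if t: "t \<in> {0..1}" for t
  proof -
    have "h \<bullet> (D2F (p t) *v h) - h \<bullet> (D2F (p 0) *v h) = h \<bullet> ((D2F (p t) - D2F x) *v h)"
      unfolding p_def by (simp add: matrix_vector_mult_diff_rdistrib inner_diff_right)
    also have "\<bar>\<dots>\<bar> \<le> (real CARD('d))^2 * norm (D2F (p t) - D2F x) * (norm h)^2"
      by (rule abs_quadratic_form_le)
    also have "\<dots> \<le> (real CARD('d))^2 * \<eta> * (norm h)^2"
      using t p_in[OF t] by (intro mult_right_mono mult_left_mono osc)
        (auto simp: p_def h_def mult_left_le_one_le)
    finally show ?thesis .
  qed
  have "taylor_rem x y = F (p 1) - F (p 0) - DF (p 0) \<bullet> h - h \<bullet> (D2F (p 0) *v h) / 2"
    unfolding taylor_rem_def p_def h_def by simp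
  also have "\<bar>\<dots>\<bar> \<le> (real CARD('d))^2 * \<eta> * (norm h)^2"
    by (rule second_order_remainder_unit_interval[OF d1 d2 osc_path])
  finally show ?thesis unfolding h_def .
qed

lemma taylor_rem_le_sq:
  assumes x: "x \<in> simplexS"
  obtains C where "\<And>y. y \<in> simplexS \<Longrightarrow> \<bar>taylor_rem x y\<bar> \<le> C * (norm (y - x))^2"
proof -
  have "bounded (D2F ` simplexS)"
    by (intro compact_imp_bounded compact_continuous_image continuous_D2F compact_simplexS)
  then obtain K where K: "\<And>z. z \<in> simplexS \<Longrightarrow> norm (D2F z) \<le> K"
    unfolding bounded_iff by blast
  have "\<bar>taylor_rem x y\<bar> \<le> (real CARD('d))^2 * (2 * K) * (norm (y - x))^2" if "y \<in> simplexS" for y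
  proof (rule abs_taylor_rem_le[OF x that])
    fix z :: "real^'d" assume "z \<in> simplexS"
    then show "norm (D2F z - D2F x) \<le> 2 * K"
      using norm_triangle_ineq4[of "D2F z" "D2F x"] K[of z] K[OF x] by linarith
  qed
  then show ?thesis using that by blast
qed

lemma taylor_rem_little_o:
  assumes x: "x \<in> simplexS" and e: "e > 0"
  shows "\<exists>d>0. \<forall>y\<in>simplexS. norm (y - x) < d \<longrightarrow> \<bar>taylor_rem x y\<bar> \<le> e * (norm (y - x))^2"
proof -
  let ?c = "(real CARD('d))^2"
  obtain d where d: "d > 0" "\<And>z. z \<in> simplexS \<Longrightarrow> dist z x < d \<Longrightarrow> dist (D2F z) (D2F x) < e / ?c"
    using continuous_D2F x e unfolding continuous_on_iff by (metis divide_pos_pos of_nat_0_less_iff zero_less_card_finite zero_less_power)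
  have "\<bar>taylor_rem x y\<bar> \<le> ?c * (e / ?c) * (norm (y - x))^2" if y: "y \<in> simplexS" "norm (y - x) < d" for y
  proof (rule abs_taylor_rem_le[OF x y(1)])
    fix z :: "real^'d" assume "z \<in> simplexS" "norm (z - x) \<le> norm (y - x)"
    then show "norm (D2F z - D2F x) \<le> e / ?c" using d(2)[of z] y(2) by (simp add: dist_norm)
  qed
  then show ?thesis using d(1) by auto
qed

definition bias_coeff :: "real^'d \<Rightarrow> real" where
  "bias_coeff x = (1/2) * (\<Sum>i\<in>UNIV. \<Sum>j\<in>UNIV. ((if i = j then x $ i else 0) - x $ i * x $ j) * D2F x $ i $ j)"

lemma bernstein_bias_eq:
  assumes "simplex_point x" and m: "m > 0"
  shows "real m * (bernstein F m x - F x)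
    = bias_coeff x
      + real m * bern_sum m (\<lambda>k. taylor_rem x (grid_point m k)) x"
proof -
  interpret simplex_point x by fact
  let ?d = "\<lambda>k i. grid_point m k $ i - x $ i"
  have expand: "F (grid_point m k) - F x = (\<Sum>i\<in>UNIV. DF x $ i * ?d k i)
      + (1/2) * (\<Sum>i\<in>UNIV. \<Sum>j\<in>UNIV. D2F x $ i $ j * (?d k i * ?d k j))
      + taylor_rem x (grid_point m k)" for k
    unfolding taylor_rem_def by (simp add: inner_vec_def matrix_vector_mult_def sum_distrib_left mult_ac)
  have "bernstein F m x - F x = bern_sum m (\<lambda>k. F (grid_point m k) - F x) x"
    by (simp add: bernstein_eq_bern_sum bern_sum_diff bern_sum_const)
  also have "\<dots> = (1/2) * (\<Sum>i\<in>UNIV. \<Sum>j\<in>UNIV. D2F x $ i $ j * (((if i = j then x $ i else 0) - x $ i * x $ j) / real m))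
      + bern_sum m (\<lambda>k. taylor_rem x (grid_point m k)) x"
    unfolding expand bern_sum_add bern_sum_sum bern_sum_cmult bern_sum_grid_diff[OF m] bern_sum_grid_diff_mult[OF m]
    by simp
  also have "(1/2) * (\<Sum>i\<in>UNIV. \<Sum>j\<in>UNIV. D2F x $ i $ j * (((if i = j then x $ i else 0) - x $ i * x $ j) / real m))
      = bias_coeff x / real m"
    unfolding bias_coeff_def by (simp add: sum_divide_distrib mult_ac)
  finally show ?thesis using m by (simp add: field_simps)
qed

lemma bernstein_bias_tendsto:
  assumes "simplex_point x"
  shows "(\<lambda>m. real m * (bernstein F m x - F x))
    \<longlonglongrightarrow> bias_coeff x"
proof -
  interpret simplex_point x by fact
  obtain C where C: "\<And>y. y \<in> simplexS \<Longrightarrow> \<bar>taylor_rem x y\<bar> \<le> C * (norm (y - x))^2"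
    using taylor_rem_le_sq[OF in_simplexS] by blast
  have "(\<lambda>m. real m * bern_sum m (\<lambda>k. \<bar>taylor_rem x (grid_point m k)\<bar>) x) \<longlonglongrightarrow> 0"
    using bern_sum_abs_rem_grid_tendsto_0[OF C taylor_rem_little_o[OF in_simplexS]] .
  then have "(\<lambda>m. real m * bern_sum m (\<lambda>k. taylor_rem x (grid_point m k)) x) \<longlonglongrightarrow> 0"
    by (rule Lim_null_comparison[rotated])
      (auto simp: abs_mult intro!: always_eventually mult_left_mono abs_bern_sum_le)
  then have "(\<lambda>m. bias_coeff x + real m * bern_sum m (\<lambda>k. taylor_rem x (grid_point m k)) x)
    \<longlonglongrightarrow> bias_coeff x"
    using tendsto_add[OF tendsto_const] by fastforce
  then show ?thesis
    by (rule Lim_transform_eventually)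
      (auto simp: eventually_sequentially bernstein_bias_eq[OF assms] intro!: exI[of _ 1])
qed

end

section \<open>Normal limits and Slutsky's lemma\<close>

lemma isCont_std_normal_cdf: "isCont (cdf std_normal_distribution) t"
proof -
  have "AE x in lborel. x \<in> {t} \<longrightarrow> ennreal (std_normal_density x) = 0"
    by (rule AE_mp[OF AE_lborel_singleton[of t]]) auto
  then have "{t} \<in> null_sets (density lborel (\<lambda>x. ennreal (std_normal_density x)))"
    by (subst null_sets_density_iff) auto
  then have "measure std_normal_distribution {t} = 0"
    by (simp add: measure_def emeasure_eq_0 null_setsD1)
  then show ?thesis
    using finite_borel_measure.isCont_cdf[OF real_distribution.finite_borel_measure_M[OF real_dist_normal_dist]]
    by simp
qed

lemma cdf_normal_distr:
  assumes v: "v > 0"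
  shows "cdf (normal_distr mu v) t = cdf std_normal_distribution ((t - mu) / sqrt v)"
proof -
  interpret N: prob_space std_normal_distribution
    using real_dist_normal_dist real_distribution_def by blast
  have "distributed std_normal_distribution lborel (\<lambda>x. x) (\<lambda>x. ennreal (normal_density 0 1 x))"
    unfolding distributed_def by (auto simp: distr_id2 density_cong)
  then have "distributed std_normal_distribution lborel (\<lambda>x. mu + sqrt v * x)
      (normal_density (mu + sqrt v * 0) (\<bar>sqrt v\<bar> * 1))"
    by (rule N.normal_density_affine) (use v in auto)
  then have affine: "distr std_normal_distribution lborel (\<lambda>x. mu + sqrt v * x) = normal_distr mu v"
    using v unfolding distributed_def normal_distr_def by simp
  have "cdf (normal_distr mu v) t
      = measure std_normal_distribution ((\<lambda>x. mu + sqrt v * x) -` {..t} \<inter> space std_normal_distribution)"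
    unfolding cdf_def affine[symmetric] by (rule measure_distr) simp_all
  also have "(\<lambda>x. mu + sqrt v * x) -` {..t} \<inter> space std_normal_distribution = {..(t - mu) / sqrt v}"
    using v by (auto simp: field_simps)
  finally show ?thesis by (simp add: cdf_def)
qed

context prob_space
begin

lemma cdf_distr_eq_prob:
  assumes [measurable]: "Y \<in> borel_measurable M"
  shows "cdf (distr M borel Y) t = prob {\<omega>\<in>space M. Y \<omega> \<le> t}"
  unfolding cdf_def by (subst measure_distr) (auto intro!: arg_cong[where f=prob])

lemma weak_conv_m_distr_if_prob_le_tendsto:
  assumes "\<And>n. V n \<in> borel_measurable M"
    and "\<And>t. (\<lambda>n. prob {\<omega>\<in>space M. V n \<omega> \<le> t}) \<longlonglongrightarrow> cdf N t"
  shows "weak_conv_m (\<lambda>n. distr M borel (V n)) N"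
  unfolding weak_conv_m_def weak_conv_def using assms cdf_distr_eq_prob by simp

lemma prob_le_squeeze:
  fixes a v :: "'a \<Rightarrow> real"
  assumes [measurable]: "a \<in> borel_measurable M" "v \<in> borel_measurable M" and c: "\<bar>c - c0\<bar> < d"
  defines "R \<equiv> prob {\<omega>\<in>space M. d \<le> \<bar>v \<omega> - a \<omega> - c\<bar>}"
  shows "prob {\<omega>\<in>space M. v \<omega> \<le> t} \<le> prob {\<omega>\<in>space M. a \<omega> \<le> t - c0 + 2 * d} + R"
    and "prob {\<omega>\<in>space M. a \<omega> \<le> t - c0 - 2 * d} \<le> prob {\<omega>\<in>space M. v \<omega> \<le> t} + R"
proof -
  let ?V = "{\<omega>\<in>space M. v \<omega> \<le> t}"
  let ?R = "{\<omega>\<in>space M. d \<le> \<bar>v \<omega> - a \<omega> - c\<bar>}"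
  have sets: "?V \<in> events" "?R \<in> events" "{\<omega>\<in>space M. a \<omega> \<le> s} \<in> events" for s by measurable
  have "prob ?V \<le> prob ({\<omega>\<in>space M. a \<omega> \<le> t - c0 + 2 * d} \<union> ?R)"
    using sets c by (intro finite_measure_mono) auto
  also have "\<dots> \<le> prob {\<omega>\<in>space M. a \<omega> \<le> t - c0 + 2 * d} + R"
    unfolding R_def using sets by (intro measure_subadditive) auto
  finally show "prob ?V \<le> prob {\<omega>\<in>space M. a \<omega> \<le> t - c0 + 2 * d} + R" .
  have "prob {\<omega>\<in>space M. a \<omega> \<le> t - c0 - 2 * d} \<le> prob (?V \<union> ?R)"
    using sets c by (intro finite_measure_mono) auto
  also have "\<dots> \<le> prob ?V + R"
    unfolding R_def using sets by (intro measure_subadditive) auto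
  finally show "prob {\<omega>\<in>space M. a \<omega> \<le> t - c0 - 2 * d} \<le> prob ?V + R" .
qed

lemma prob_le_tendsto_slutsky:
  fixes A V :: "nat \<Rightarrow> 'a \<Rightarrow> real" and c :: "nat \<Rightarrow> real" and G :: "real \<Rightarrow> real"
  assumes A: "\<And>t. (\<lambda>n. prob {\<omega>\<in>space M. A n \<omega> \<le> t}) \<longlonglongrightarrow> G t"
    and G: "\<And>t. isCont G t"
    and R: "\<And>e. e > 0 \<Longrightarrow> (\<lambda>n. prob {\<omega>\<in>space M. e \<le> \<bar>V n \<omega> - A n \<omega> - c n\<bar>}) \<longlonglongrightarrow> 0"
    and c: "c \<longlonglongrightarrow> c0"
    and meas [measurable]: "\<And>n. A n \<in> borel_measurable M" "\<And>n. V n \<in> borel_measurable M"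
  shows "(\<lambda>n. prob {\<omega>\<in>space M. V n \<omega> \<le> t}) \<longlonglongrightarrow> G (t - c0)"
proof (rule LIMSEQ_I)
  fix e :: real assume e: "e > 0"
  let ?s = "t - c0"
  obtain d0 where d0: "d0 > 0" "\<And>y. \<bar>y - ?s\<bar> < d0 \<Longrightarrow> \<bar>G y - G ?s\<bar> < e / 2"
    using G[of ?s, unfolded continuous_at_eps_delta] e by (metis dist_real_def half_gt_zero)
  define d where "d = d0 / 3"
  have d: "d > 0" "\<bar>G (?s + 2 * d) - G ?s\<bar> < e / 2" "\<bar>G (?s - 2 * d) - G ?s\<bar> < e / 2"
    using d0 unfolding d_def by (auto intro!: d0(2))
  have "\<forall>\<^sub>F n in sequentially. \<bar>prob {\<omega>\<in>space M. A n \<omega> \<le> ?s + 2 * d} - G (?s + 2 * d)\<bar> < e / 4"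
    "\<forall>\<^sub>F n in sequentially. \<bar>prob {\<omega>\<in>space M. A n \<omega> \<le> ?s - 2 * d} - G (?s - 2 * d)\<bar> < e / 4"
    "\<forall>\<^sub>F n in sequentially. prob {\<omega>\<in>space M. d \<le> \<bar>V n \<omega> - A n \<omega> - c n\<bar>} < e / 4"
    "\<forall>\<^sub>F n in sequentially. \<bar>c n - c0\<bar> < d"
    using A[of "?s + 2 * d", unfolded tendsto_iff, rule_format, of "e / 4"]
      A[of "?s - 2 * d", unfolded tendsto_iff, rule_format, of "e / 4"] R[OF d(1), unfolded tendsto_iff, rule_format, of "e / 4"]
      c[unfolded tendsto_iff, rule_format, of d] e d by (auto simp: dist_real_def)
  then have "\<forall>\<^sub>F n in sequentially. \<bar>prob {\<omega>\<in>space M. V n \<omega> \<le> t} - G ?s\<bar> < e"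
  proof eventually_elim
    case (elim n)
    have "prob {\<omega>\<in>space M. A n \<omega> \<le> ?s + 2 * d} < G (?s + 2 * d) + e / 4"
      "G (?s - 2 * d) - e / 4 < prob {\<omega>\<in>space M. A n \<omega> \<le> ?s - 2 * d}"
      using elim(1,2) by (simp_all only: abs_less_iff) linarith+
    moreover note prob_le_squeeze[OF meas(1)[of n] meas(2)[of n] elim(4), where t=t]
    ultimately have "prob {\<omega>\<in>space M. V n \<omega> \<le> t} < G ?s + e" "G ?s - e < prob {\<omega>\<in>space M. V n \<omega> \<le> t}"
      using elim(3) d(2,3) by (simp_all only: abs_less_iff) linarith+
    then show ?case by (simp only: abs_less_iff) linarith
  qed
  then show "\<exists>N. \<forall>n\<ge>N. norm (prob {\<omega>\<in>space M. V n \<omega> \<le> t} - G ?s) < e"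
    by (simp add: eventually_sequentially)
qed

end

section \<open>The estimator as a sample mean\<close>

lemma atMost_vec_eq: "{..a} = {y :: real^'d::finite. \<forall>j. y $ j \<le> a $ j}"
  by (auto simp: less_eq_vec_def)

lemma mcdf_eq_measure_atMost: "mcdf \<mu> a = measure \<mu> {..a}"
  unfolding mcdf_def atMost_vec_eq ..

lemma ecdf_eq_indicator_mean: "ecdf X n \<omega> a = (\<Sum>i<n. indicator {..a} (X i \<omega>)) / real n"
  by (simp only: ecdf_def indicator_def of_bool_def atMost_vec_eq mem_Collect_eq)

lemma atMost_vec_borel [measurable]: "{..a :: real^'d::finite} \<in> sets borel"
  by (rule borel_closed) simp

definition bern_kernel :: "nat \<Rightarrow> real^'d::finite \<Rightarrow> real^'d \<Rightarrow> real" where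
  "bern_kernel m x y = bern_sum m (\<lambda>k. indicator {..grid_point m k} y) x"

lemma bern_kernel_measurable [measurable]: "bern_kernel m x \<in> borel_measurable borel"
  unfolding bern_kernel_def bern_sum_def by measurable

lemma bernstein_ecdf_eq_mean: "bernstein (ecdf X n \<omega>) m x = (\<Sum>i<n. bern_kernel m x (X i \<omega>)) / real n"
proof -
  have "bernstein (ecdf X n \<omega>) m x = bern_sum m (\<lambda>k. (1 / real n) * (\<Sum>i<n. indicator {..grid_point m k} (X i \<omega>))) x"
    unfolding bernstein_eq_bern_sum ecdf_eq_indicator_mean by simp
  then show ?thesis unfolding bern_sum_cmult bern_sum_sum bern_kernel_def by simp
qed

lemma bernstein_mcdf_eq_integral:
  fixes x :: "real^'d::finite"
  assumes "prob_space \<mu>" "sets \<mu> = sets borel"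
  shows "bernstein (mcdf \<mu>) m x = (\<integral>y. bern_kernel m x y \<partial>\<mu>)"
proof -
  interpret prob_space \<mu> by fact
  have "integrable \<mu> (indicator {..a} :: real^'d \<Rightarrow> real)" for a
    using assms(2) by (intro integrable_real_indicator) (auto simp: emeasure_eq_measure)
  then have "(\<integral>y. bern_kernel m x y \<partial>\<mu>) = bern_sum m (\<lambda>k. \<integral>y. indicator {..grid_point m k} y \<partial>\<mu>) x"
    unfolding bern_kernel_def bern_sum_def by (simp add: Bochner_Integration.integral_sum integrable_mult_left)
  also have "\<dots> = bernstein (mcdf \<mu>) m x"
    unfolding bernstein_eq_bern_sum mcdf_eq_measure_atMost using assms(2) by simp
  finally show ?thesis ..
qed

lemma integral_abs_indicator_atMost_diff:
  assumes "prob_space \<mu>" "sets \<mu> = sets borel"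
  shows "(\<integral>y. \<bar>indicator {..a} y - indicator {..b} y\<bar> \<partial>\<mu>) = mcdf \<mu> a + mcdf \<mu> b - 2 * mcdf \<mu> (inf a (b :: real^'d::finite))"
proof -
  interpret prob_space \<mu> by fact
  have int: "integrable \<mu> (indicator {..c} :: real^'d \<Rightarrow> real)" for c
    using assms(2) by (intro integrable_real_indicator) (auto simp: emeasure_eq_measure)
  have "\<bar>indicator {..a} y - indicator {..b} y\<bar>
      = indicator {..a} y + indicator {..b} y - 2 * (indicator {..inf a b} y :: real)" for y
    by (auto simp: indicator_def)
  then show ?thesis
    using int assms(2) by (simp add: Bochner_Integration.integral_diff Bochner_Integration.integral_add mcdf_eq_measure_atMost)
qed

lemma inf_in_simplexS: "y \<in> simplexS \<Longrightarrow> z \<in> simplexS \<Longrightarrow> inf y z \<in> simplexS"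
proof -
  assume y: "y \<in> simplexS" and z: "z \<in> simplexS"
  have "(\<Sum>i\<in>UNIV. min (y $ i) (z $ i)) \<le> (\<Sum>i\<in>UNIV. y $ i)" by (intro sum_mono) simp
  then show ?thesis
    using y z by (auto simp: simplexS_def l1norm_def inf_vec_def inf_min min_le_iff_disj)
qed

lemma norm_inf_diff_le: "norm (inf y x - x) \<le> norm (y - (x :: real^'d::finite))"
  by (rule norm_le_componentwise_cart) (auto simp: inf_vec_def inf_min)

context simplex_point
begin

lemma bern_kernel_nonneg: "0 \<le> bern_kernel m x y"
  unfolding bern_kernel_def by (rule bern_sum_nonneg) simp

lemma bern_kernel_le_1: "bern_kernel m x y \<le> 1"
  using bern_sum_mono[of m "\<lambda>k. indicator {..grid_point m k} y" "\<lambda>_. 1"]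
  unfolding bern_kernel_def bern_sum_const by (simp add: indicator_def)

lemma abs_bern_kernel_diff_le:
  "\<bar>bern_kernel m x y - indicator {..x} y\<bar> \<le> bern_sum m (\<lambda>k. \<bar>indicator {..grid_point m k} y - indicator {..x} y\<bar>) x"
  using abs_bern_sum_le[of m "\<lambda>k. indicator {..grid_point m k} y - indicator {..x} y"]
  unfolding bern_kernel_def bern_sum_diff bern_sum_const .

lemma mcdf_orthant_diff_small:
  assumes cont: "continuous (at x within simplexS) (mcdf \<mu>)" and e: "e > 0"
  shows "\<exists>d>0. \<forall>y\<in>simplexS. norm (y - x) < d \<longrightarrow> \<bar>mcdf \<mu> y + mcdf \<mu> x - 2 * mcdf \<mu> (inf y x)\<bar> \<le> e"
proof -
  obtain d where d: "d > 0" "\<And>z. z \<in> simplexS \<Longrightarrow> dist z x < d \<Longrightarrow> dist (mcdf \<mu> z) (mcdf \<mu> x) < e / 3"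
    using cont e unfolding continuous_within_eps_delta by (metis divide_pos_pos zero_less_numeral)
  have "\<bar>mcdf \<mu> y + mcdf \<mu> x - 2 * mcdf \<mu> (inf y x)\<bar> \<le> e" if y: "y \<in> simplexS" "norm (y - x) < d" for y
  proof -
    have "\<bar>mcdf \<mu> (inf y x) - mcdf \<mu> x\<bar> < e / 3"
      using d(2)[OF inf_in_simplexS[OF y(1) in_simplexS]] norm_inf_diff_le[of y x] y(2) by (simp add: dist_norm)
    moreover have "\<bar>mcdf \<mu> y - mcdf \<mu> x\<bar> < e / 3" using d(2) y by (simp add: dist_norm)
    ultimately show ?thesis by linarith
  qed
  then show ?thesis using d(1) by blast
qed

lemma integral_abs_bern_kernel_diff_tendsto_0:
  assumes \<mu>: "prob_space \<mu>" "sets \<mu> = sets borel"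
    and cont: "continuous (at x within simplexS) (mcdf \<mu>)"
  shows "(\<lambda>m. \<integral>y. \<bar>bern_kernel m x y - indicator {..x} y\<bar> \<partial>\<mu>) \<longlonglongrightarrow> 0"
proof -
  interpret prob_space \<mu> by fact
  define q where "q a = mcdf \<mu> a + mcdf \<mu> x - 2 * mcdf \<mu> (inf a x)" for a
  have "0 \<le> mcdf \<mu> a" "mcdf \<mu> a \<le> 1" for a unfolding mcdf_def by simp_all
  then have "\<bar>q a\<bar> \<le> 4" for a unfolding q_def by (smt (verit))
  then have lim: "(\<lambda>m. bern_sum m (\<lambda>k. \<bar>q (grid_point m k)\<bar>) x) \<longlonglongrightarrow> 0"
    using mcdf_orthant_diff_small[OF cont] unfolding q_def by (intro bern_sum_abs_grid_tendsto_0)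
  have ind: "integrable \<mu> (indicator {..a} :: real^'d \<Rightarrow> real)" for a
    using \<mu>(2) by (intro integrable_real_indicator) (auto simp: emeasure_eq_measure)
  have "(\<integral>y. \<bar>bern_kernel m x y - indicator {..x} y\<bar> \<partial>\<mu>)
      \<le> (\<integral>y. bern_sum m (\<lambda>k. \<bar>indicator {..grid_point m k} y - indicator {..x} y\<bar>) x \<partial>\<mu>)" for m
    unfolding bern_kernel_def bern_sum_def
    by (intro integral_mono abs_bern_kernel_diff_le[unfolded bern_kernel_def bern_sum_def] integrable_abs
        Bochner_Integration.integrable_diff Bochner_Integration.integrable_sum integrable_mult_left ind)
  also have "\<dots> m = bern_sum m (\<lambda>k. q (grid_point m k)) x" for m
    unfolding bern_sum_def q_def integral_abs_indicator_atMost_diff[OF \<mu>, symmetric]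
    by (simp add: Bochner_Integration.integral_sum integrable_mult_left ind)
  also have "\<dots> m \<le> bern_sum m (\<lambda>k. \<bar>q (grid_point m k)\<bar>) x" for m
    by (rule bern_sum_mono) simp
  finally show ?thesis
    by (intro tendsto_sandwich[OF _ _ tendsto_const lim] always_eventually allI) auto
qed

end

section \<open>I.i.d. samples\<close>

text \<open>At \<open>n = 0\<close> both sides vanish because division by zero yields zero.\<close>

lemma sqrt_mult_mean_diff: "sqrt (real n) * (S / real n - c) = (S - real n * c) / sqrt (real n)"
proof (cases "n = 0")
  case False
  then have "sqrt (real n) * sqrt (real n) = real n" "sqrt (real n) > 0" by simp_all
  then show ?thesis using False by (simp add: field_simps)
qed simp

lemma abs_sum_div_sqrt_le:
  fixes f :: "nat \<Rightarrow> real"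
  assumes "\<And>i. \<bar>f i\<bar> \<le> C"
  shows "\<bar>(\<Sum>i<n. f i) / sqrt n\<bar> \<le> C * n"
proof (cases "n = 0")
  case False
  have "\<bar>\<Sum>i<n. f i\<bar> \<le> (\<Sum>i<n. C)" by (rule order_trans[OF sum_abs sum_mono]) (rule assms)
  moreover have "\<bar>\<Sum>i<n. f i\<bar> / sqrt n \<le> \<bar>\<Sum>i<n. f i\<bar>"
    using False mult_left_mono[of 1 "sqrt n" "\<bar>\<Sum>i<n. f i\<bar>"] by (simp add: divide_le_eq)
  ultimately show ?thesis by (simp add: abs_divide mult.commute)
qed simp

locale iid_sample = prob_space M for M :: "'a measure" +
  fixes \<mu> :: "(real^'d::finite) measure" and X :: "nat \<Rightarrow> 'a \<Rightarrow> real^'d"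
  assumes prob_space_\<mu>: "prob_space \<mu>" and sets_\<mu>: "sets \<mu> = sets borel"
    and indep_X: "indep_vars (\<lambda>_. borel) X UNIV"
    and distr_X: "\<And>i. distr M borel (X i) = \<mu>"
begin

sublocale law: prob_space \<mu> by (rule prob_space_\<mu>)

lemma X_measurable [measurable]: "X i \<in> borel_measurable M"
  using indep_X unfolding indep_vars_def by auto

lemma measurable_\<mu>: "g \<in> borel_measurable borel \<Longrightarrow> g \<in> borel_measurable \<mu>"
  by (simp add: measurable_cong_sets[OF sets_\<mu> refl])

lemma expectation_comp_X:
  assumes [measurable]: "g \<in> borel_measurable borel"
  shows "expectation (\<lambda>\<omega>. g (X i \<omega>) :: real) = (\<integral>y. g y \<partial>\<mu>)"
proof -
  have "(\<integral>y. g y \<partial>distr M borel (X i)) = expectation (\<lambda>\<omega>. g (X i \<omega>))"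
    by (rule integral_distr) simp_all
  then show ?thesis unfolding distr_X by simp
qed

lemma integrable_\<mu>_bounded:
  assumes [measurable]: "g \<in> borel_measurable borel" and "\<And>y. \<bar>g y\<bar> \<le> B"
  shows "integrable \<mu> (g :: real^'d \<Rightarrow> real)"
  using assms(2) measurable_\<mu>[OF assms(1)]
  by (intro law.integrable_const_bound[of g B]) auto

lemma abs_integral_\<mu>_le:
  assumes [measurable]: "g \<in> borel_measurable borel" and bound: "\<And>y. \<bar>g y\<bar> \<le> B"
  shows "\<bar>\<integral>y. g y \<partial>\<mu>\<bar> \<le> (B :: real)"
proof -
  have "\<bar>\<integral>y. g y \<partial>\<mu>\<bar> \<le> (\<integral>y. \<bar>g y\<bar> \<partial>\<mu>)" by (rule integral_abs_bound)
  also have "\<dots> \<le> (\<integral>y. B \<partial>\<mu>)"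
    using integrable_\<mu>_bounded[of g B] bound by (intro integral_mono integrable_abs) auto
  finally show ?thesis by (simp add: law.prob_space)
qed

lemma expectation_sum_sq:
  fixes g :: "real^'d \<Rightarrow> real"
  assumes [measurable]: "g \<in> borel_measurable borel" and bound: "\<And>y. \<bar>g y\<bar> \<le> B"
    and mean_0: "(\<integral>y. g y \<partial>\<mu>) = 0"
  shows "expectation (\<lambda>\<omega>. (\<Sum>i<n. g (X i \<omega>))^2) = real n * (\<integral>y. (g y)^2 \<partial>\<mu>)"
proof -
  have B: "0 \<le> B" using bound[of 0] by linarith
  have int: "integrable M (\<lambda>\<omega>. g (X i \<omega>))" for i
    using bound by (intro integrable_const_bound[where B=B]) auto
  have int2: "integrable M (\<lambda>\<omega>. g (X i \<omega>) * g (X j \<omega>))" for i j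
    using bound B by (intro integrable_const_bound[where B="B * B"]) (auto simp: abs_mult intro!: mult_mono)
  have cross: "expectation (\<lambda>\<omega>. g (X i \<omega>) * g (X j \<omega>)) = 0" if "i \<noteq> j" for i j
  proof -
    have "indep_vars (\<lambda>_. borel) (\<lambda>i \<omega>. g (X i \<omega>)) {i, j}"
      by (rule indep_vars_subset[OF indep_vars_compose2[OF indep_X]]) auto
    then have "expectation (\<lambda>\<omega>. \<Prod>l\<in>{i, j}. g (X l \<omega>)) = (\<Prod>l\<in>{i, j}. expectation (\<lambda>\<omega>. g (X l \<omega>)))"
      by (intro indep_vars_lebesgue_integral int) auto
    then show ?thesis using that mean_0 by (simp add: expectation_comp_X)
  qed
  have diag: "expectation (\<lambda>\<omega>. g (X i \<omega>) * g (X i \<omega>)) = (\<integral>y. (g y)^2 \<partial>\<mu>)" for i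
    using expectation_comp_X[of "\<lambda>y. (g y)^2" i] by (simp add: power2_eq_square)
  have "expectation (\<lambda>\<omega>. (\<Sum>i<n. g (X i \<omega>))^2) = (\<Sum>i<n. \<Sum>j<n. expectation (\<lambda>\<omega>. g (X i \<omega>) * g (X j \<omega>)))"
    unfolding power2_eq_square sum_product by (simp add: Bochner_Integration.integral_sum int2)
  also have "\<dots> = (\<Sum>i<n. \<Sum>j<n. if i = j then (\<integral>y. (g y)^2 \<partial>\<mu>) else 0)"
    by (intro sum.cong refl) (simp add: cross diag)
  finally show ?thesis by simp
qed

lemma expectation_normalized_sum_sq_le:
  fixes g :: "real^'d \<Rightarrow> real"
  assumes [measurable]: "g \<in> borel_measurable borel" and bound: "\<And>y. \<bar>g y\<bar> \<le> B"
  shows "expectation (\<lambda>\<omega>. ((\<Sum>i<n. g (X i \<omega>) - (\<integral>y. g y \<partial>\<mu>)) / sqrt n)^2) \<le> (\<integral>y. (g y)^2 \<partial>\<mu>)"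
proof -
  define c where "c = (\<integral>y. g y \<partial>\<mu>)"
  have sq_bound: "\<bar>(g y)^2\<bar> \<le> B^2" for y
    using power_mono[OF bound[of y], of 2] by simp
  have int: "integrable \<mu> g" "integrable \<mu> (\<lambda>y. (g y)^2)"
    by (rule integrable_\<mu>_bounded[OF _ bound], simp) (rule integrable_\<mu>_bounded[OF _ sq_bound], simp)
  have "\<bar>g y - c\<bar> \<le> 2 * B" for y
    using bound[of y] abs_integral_\<mu>_le[of g B, OF _ bound] unfolding c_def by simp
  moreover have "(\<integral>y. g y - c \<partial>\<mu>) = 0" unfolding c_def using int by (simp add: law.prob_space)
  ultimately have "expectation (\<lambda>\<omega>. ((\<Sum>i<n. g (X i \<omega>) - c) / sqrt n)^2)
      = (\<integral>y. (g y - c)^2 \<partial>\<mu>) * (real n / real n)"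
    unfolding power_divide using expectation_sum_sq[where g="\<lambda>y. g y - c" and B="2 * B" and n=n] by simp
  also have "\<dots> \<le> law.variance g"
    unfolding c_def by (simp add: mult_left_le)
  also have "\<dots> \<le> (\<integral>y. (g y)^2 \<partial>\<mu>)"
    using law.variance_eq[OF int] by simp
  finally show ?thesis unfolding c_def .
qed

lemma prob_normalized_sum_ge_le:
  fixes g :: "real^'d \<Rightarrow> real"
  assumes [measurable]: "g \<in> borel_measurable borel" and bound: "\<And>y. \<bar>g y\<bar> \<le> B" and e: "e > 0"
  shows "prob {\<omega>\<in>space M. e \<le> \<bar>(\<Sum>i<n. g (X i \<omega>) - (\<integral>y. g y \<partial>\<mu>)) / sqrt n\<bar>} \<le> (\<integral>y. (g y)^2 \<partial>\<mu>) / e^2"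
proof -
  define R where "R \<omega> = (\<Sum>i<n. g (X i \<omega>) - (\<integral>y. g y \<partial>\<mu>)) / sqrt n" for \<omega>
  have [measurable]: "R \<in> borel_measurable M" unfolding R_def by measurable
  have "\<bar>g y - (\<integral>y. g y \<partial>\<mu>)\<bar> \<le> 2 * B" for y
    using bound[of y] abs_integral_\<mu>_le[of g B, OF _ bound] by simp
  then have "\<bar>R \<omega>\<bar> \<le> 2 * B * n" for \<omega>
    unfolding R_def by (rule abs_sum_div_sqrt_le)
  then have "integrable M (\<lambda>\<omega>. (R \<omega>)^2)"
    using bound[of undefined] by (intro integrable_const_bound[where B="(2 * B * n)^2"])
      (auto simp: abs_le_square_iff[symmetric])
  then have "prob {\<omega>\<in>space M. e^2 \<le> (R \<omega>)^2} \<le> expectation (\<lambda>\<omega>. (R \<omega>)^2) / e^2"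
    using e by (intro integral_Markov_inequality_measure[where A="space M"]) auto
  also have "\<dots> \<le> (\<integral>y. (g y)^2 \<partial>\<mu>) / e^2"
    unfolding R_def using expectation_normalized_sum_sq_le[of g B, OF _ bound] by (intro divide_right_mono) auto
  also have "{\<omega>\<in>space M. e^2 \<le> (R \<omega>)^2} = {\<omega>\<in>space M. e \<le> \<bar>R \<omega>\<bar>}"
    using e by (auto simp: abs_le_square_iff[symmetric])
  finally show ?thesis unfolding R_def .
qed

lemma normalized_sum_tendsto_0_in_prob:
  fixes g :: "nat \<Rightarrow> real^'d \<Rightarrow> real"
  assumes [measurable]: "\<And>n. g n \<in> borel_measurable borel" and bound: "\<And>n y. \<bar>g n y\<bar> \<le> B"
    and sq_lim: "(\<lambda>n. \<integral>y. (g n y)^2 \<partial>\<mu>) \<longlonglongrightarrow> 0" and e: "e > 0"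
  shows "(\<lambda>n. prob {\<omega>\<in>space M. e \<le> \<bar>(\<Sum>i<n. g n (X i \<omega>) - (\<integral>y. g n y \<partial>\<mu>)) / sqrt n\<bar>}) \<longlonglongrightarrow> 0"
proof -
  have upper: "(\<lambda>n. (\<integral>y. (g n y)^2 \<partial>\<mu>) / e^2) \<longlonglongrightarrow> 0"
    using tendsto_divide[OF sq_lim tendsto_const, of "e^2"] e by simp
  show ?thesis
    by (intro tendsto_sandwich[OF always_eventually always_eventually tendsto_const upper] allI
        prob_normalized_sum_ge_le[OF _ bound e] measure_nonneg) simp
qed

lemma indicator_clt:
  assumes F: "0 < mcdf \<mu> x" "mcdf \<mu> x < 1"
  shows "(\<lambda>n. prob {\<omega>\<in>space M. (\<Sum>i<n. indicator {..x} (X i \<omega>) - mcdf \<mu> x) / sqrt n \<le> t})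
    \<longlonglongrightarrow> cdf std_normal_distribution (t / sqrt (mcdf \<mu> x * (1 - mcdf \<mu> x)))"
proof -
  define p where "p = mcdf \<mu> x"
  define \<sigma> where "\<sigma> = sqrt (p * (1 - p))"
  define Y where "Y i \<omega> = (indicator {..x} (X i \<omega>) :: real)" for i \<omega>
  have \<sigma>: "\<sigma> > 0" "\<sigma>^2 = p * (1 - p)" unfolding \<sigma>_def p_def using F by simp_all
  have [measurable]: "Y i \<in> borel_measurable M" for i unfolding Y_def by measurable
  have mean: "expectation (Y i) = p" for i
    using expectation_comp_X[of "indicator {..x}" i] sets_\<mu>
    unfolding Y_def p_def mcdf_eq_measure_atMost by simp
  have "weak_conv_m (\<lambda>n. distr M borel (\<lambda>\<omega>. (\<Sum>i<n. Y i \<omega> - p) / sqrt (n * \<sigma>^2))) std_normal_distribution"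
  proof (rule central_limit_theorem[where \<mu>="distr \<mu> borel (indicator {..x})"])
    show "indep_vars (\<lambda>i. borel) Y UNIV"
      unfolding Y_def by (rule indep_vars_compose2[OF indep_X]) simp
    show "integrable M (\<lambda>\<omega>. (Y n \<omega>)^2)" for n
      by (rule integrable_const_bound[where B=1]) (auto simp: Y_def indicator_def)
    show "variance (Y n) = \<sigma>^2" for n
    proof -
      have "(Y n \<omega> - p)^2 = (1 - 2 * p) * Y n \<omega> + p^2" for \<omega>
        by (auto simp: Y_def indicator_def power2_eq_square algebra_simps)
      then have "variance (Y n) = expectation (\<lambda>\<omega>. (1 - 2 * p) * Y n \<omega> + p^2)"
        using mean[of n] by simp
      also have "\<dots> = (1 - 2 * p) * p + p^2"
      proof -
        have "integrable M (Y n)"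
          by (rule integrable_const_bound[where B=1]) (auto simp: Y_def indicator_def)
        then show ?thesis using mean[of n] by (simp add: prob_space)
      qed
      finally show ?thesis unfolding \<sigma>(2) by (simp add: power2_eq_square algebra_simps)
    qed
    show "distr M borel (Y n) = distr \<mu> borel (indicator {..x})" for n
      using distr_distr[of "indicator {..x} :: real^'d \<Rightarrow> real" borel borel "X n" M] distr_X
      unfolding Y_def comp_def by simp
  qed (use mean \<sigma> in auto)
  then have "(\<lambda>n. cdf (distr M borel (\<lambda>\<omega>. (\<Sum>i<n. Y i \<omega> - p) / sqrt (n * \<sigma>^2))) (t / \<sigma>))
      \<longlonglongrightarrow> cdf std_normal_distribution (t / \<sigma>)"
    using isCont_std_normal_cdf unfolding weak_conv_m_def weak_conv_def by blast
  moreover have "cdf (distr M borel (\<lambda>\<omega>. (\<Sum>i<n. Y i \<omega> - p) / sqrt (n * \<sigma>^2))) (t / \<sigma>)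
      = prob {\<omega>\<in>space M. (\<Sum>i<n. Y i \<omega> - p) / sqrt n \<le> t}" for n
  proof -
    have "(a / sqrt (n * \<sigma>^2) \<le> t / \<sigma>) \<longleftrightarrow> (a / sqrt n \<le> t)" for a
      using \<sigma>(1) by (cases "n = 0") (auto simp: real_sqrt_mult divide_le_eq le_divide_eq field_simps)
    then show ?thesis by (subst cdf_distr_eq_prob) simp_all
  qed
  ultimately show ?thesis unfolding p_def[symmetric] \<sigma>_def[symmetric] Y_def by simp
qed

lemma bernstein_ecdf_decomposition:
  fixes x :: "real^'d"
  shows "sqrt n * (bernstein (ecdf X n \<omega>) m x - bernstein (mcdf \<mu>) m x)
    = (\<Sum>i<n. indicator {..x} (X i \<omega>) - mcdf \<mu> x) / sqrt n
      + (\<Sum>i<n. (bern_kernel m x (X i \<omega>) - indicator {..x} (X i \<omega>))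
           - (\<integral>y. bern_kernel m x y - indicator {..x} y \<partial>\<mu>)) / sqrt n"
proof -
  have ind: "integrable \<mu> (indicator {..a} :: real^'d \<Rightarrow> real)" for a
    using sets_\<mu> by (intro integrable_real_indicator) (auto simp: law.emeasure_eq_measure)
  then have "integrable \<mu> (bern_kernel m x)"
    unfolding bern_kernel_def bern_sum_def by (intro Bochner_Integration.integrable_sum integrable_mult_left)
  then have "(\<integral>y. bern_kernel m x y - indicator {..x} y \<partial>\<mu>) = bernstein (mcdf \<mu>) m x - mcdf \<mu> x"
    using ind[of x] sets_\<mu> by (simp add: bernstein_mcdf_eq_integral[OF prob_space_\<mu> sets_\<mu>] mcdf_eq_measure_atMost)
  then show ?thesis
    unfolding bernstein_ecdf_eq_mean sqrt_mult_mean_diff add_divide_distrib[symmetric]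
    by (simp only: sum_subtractf sum.distrib) (simp add: algebra_simps)
qed

lemma bern_kernel_fluctuation_tendsto_0_in_prob:
  assumes "simplex_point x" and cont: "continuous (at x within simplexS) (mcdf \<mu>)"
    and m: "filterlim m at_top sequentially" and e: "e > 0"
  shows "(\<lambda>n. prob {\<omega>\<in>space M. e \<le> \<bar>(\<Sum>i<n. (bern_kernel (m n) x (X i \<omega>) - indicator {..x} (X i \<omega>))
      - (\<integral>y. bern_kernel (m n) x y - indicator {..x} y \<partial>\<mu>)) / sqrt n\<bar>}) \<longlonglongrightarrow> 0"
proof -
  interpret simplex_point x by fact
  define g where "g k y = bern_kernel k x y - indicator {..x} y" for k y
  have bound: "\<bar>g k y\<bar> \<le> 1" for k y
    using bern_kernel_nonneg[of k y] bern_kernel_le_1[of k y] unfolding g_def indicator_def by auto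
  have [measurable]: "g k \<in> borel_measurable borel" for k unfolding g_def by measurable
  have sq_le_abs: "(\<integral>y. (g k y)^2 \<partial>\<mu>) \<le> (\<integral>y. \<bar>g k y\<bar> \<partial>\<mu>)" for k
  proof (rule integral_mono)
    show "integrable \<mu> (\<lambda>y. (g k y)^2)" "integrable \<mu> (\<lambda>y. \<bar>g k y\<bar>)"
      using bound by (auto intro!: integrable_\<mu>_bounded[where B=1] simp: abs_square_le_1)
    show "(g k y)^2 \<le> \<bar>g k y\<bar>" for y
    proof -
      have "\<bar>g k y\<bar> * \<bar>g k y\<bar> \<le> \<bar>g k y\<bar> * 1" by (rule mult_left_mono[OF bound]) simp
      then show ?thesis by (simp add: power2_eq_square)
    qed
  qed
  have abs_lim: "(\<lambda>n. \<integral>y. \<bar>g (m n) y\<bar> \<partial>\<mu>) \<longlonglongrightarrow> 0"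
    unfolding g_def
    by (rule filterlim_compose[OF integral_abs_bern_kernel_diff_tendsto_0[OF prob_space_\<mu> sets_\<mu> cont] m])
  have "(\<lambda>n. \<integral>y. (g (m n) y)^2 \<partial>\<mu>) \<longlonglongrightarrow> 0"
    by (intro tendsto_sandwich[OF always_eventually always_eventually tendsto_const abs_lim] allI
        sq_le_abs Bochner_Integration.integral_nonneg zero_le_power2)
  from normalized_sum_tendsto_0_in_prob[OF _ bound this e] show ?thesis
    unfolding g_def by simp
qed

lemma bernstein_ecdf_clt:
  assumes x: "simplex_point x" and cont: "continuous (at x within simplexS) (mcdf \<mu>)"
    and F: "0 < mcdf \<mu> x" "mcdf \<mu> x < 1"
    and m: "filterlim m at_top sequentially" and b: "b \<longlonglongrightarrow> \<beta>"
  shows "weak_conv_m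
      (\<lambda>n. distr M borel (\<lambda>\<omega>. sqrt n * (bernstein (ecdf X n \<omega>) (m n) x - bernstein (mcdf \<mu>) (m n) x) + b n))
      (normal_distr \<beta> (mcdf \<mu> x * (1 - mcdf \<mu> x)))"
proof (rule weak_conv_m_distr_if_prob_le_tendsto)
  define v where "v = mcdf \<mu> x * (1 - mcdf \<mu> x)"
  have v: "v > 0" unfolding v_def using F by simp
  define A where "A n \<omega> = (\<Sum>i<n. indicator {..x} (X i \<omega>) - mcdf \<mu> x) / sqrt n" for n \<omega>
  define V where "V n \<omega> = sqrt n * (bernstein (ecdf X n \<omega>) (m n) x - bernstein (mcdf \<mu>) (m n) x) + b n" for n \<omega>
  have [measurable]: "A n \<in> borel_measurable M" "V n \<in> borel_measurable M" for n
    unfolding A_def V_def bernstein_ecdf_eq_mean by measurable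
  then show "V n \<in> borel_measurable M" for n by simp
  fix t
  have "(\<lambda>n. prob {\<omega>\<in>space M. V n \<omega> \<le> t}) \<longlonglongrightarrow> cdf std_normal_distribution ((t - \<beta>) / sqrt v)"
  proof (rule prob_le_tendsto_slutsky)
    show "(\<lambda>n. prob {\<omega>\<in>space M. A n \<omega> \<le> s}) \<longlonglongrightarrow> cdf std_normal_distribution (s / sqrt v)" for s
      unfolding A_def v_def by (rule indicator_clt[OF F])
    show "isCont (\<lambda>s. cdf std_normal_distribution (s / sqrt v)) s" for s
      using v by (intro continuous_at_compose[OF _ isCont_std_normal_cdf, unfolded comp_def] continuous_intros) auto
    show "(\<lambda>n. prob {\<omega>\<in>space M. e \<le> \<bar>V n \<omega> - A n \<omega> - b n\<bar>}) \<longlonglongrightarrow> 0" if "e > 0" for e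
      unfolding V_def A_def bernstein_ecdf_decomposition
      using bern_kernel_fluctuation_tendsto_0_in_prob[OF x cont m that] by simp
  qed (use b in simp_all)
  then show "(\<lambda>n. prob {\<omega>\<in>space M. V n \<omega> \<le> t}) \<longlonglongrightarrow> cdf (normal_distr \<beta> v) t"
    unfolding cdf_normal_distr[OF v] .
qed

end

lemma tendsto_mult_rescaled:
  fixes c :: "nat \<Rightarrow> real"
  assumes m: "filterlim m at_top sequentially" and c: "(\<lambda>k. real k * c k) \<longlonglongrightarrow> B"
    and a: "(\<lambda>n. a n / real (m n)) \<longlonglongrightarrow> l"
  shows "(\<lambda>n. a n * c (m n)) \<longlonglongrightarrow> l * B"
proof (rule Lim_transform_eventually)
  show "(\<lambda>n. a n / real (m n) * (real (m n) * c (m n))) \<longlonglongrightarrow> l * B"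
    by (intro tendsto_mult a filterlim_compose[OF c m])
  have "\<forall>\<^sub>F n in sequentially. 1 \<le> m n" using m unfolding filterlim_at_top by blast
  then show "\<forall>\<^sub>F n in sequentially. a n / real (m n) * (real (m n) * c (m n)) = a n * c (m n)"
    by eventually_elim simp
qed

theorem theorem3:
  fixes M :: "'a measure"
    and \<mu> :: "(real ^ 'd::finite) measure"
    and X :: "nat \<Rightarrow> 'a \<Rightarrow> real ^ 'd"
    and F :: "real ^ 'd \<Rightarrow> real"
    and DF :: "real ^ 'd \<Rightarrow> real ^ 'd"
    and D2F :: "real ^ 'd \<Rightarrow> real ^ 'd ^ 'd"
    and m :: "nat \<Rightarrow> nat"
    and x :: "real ^ 'd"
  assumes M: "prob_space M"
    and mu_prob: "prob_space \<mu>"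
    and mu_sets: "sets \<mu> = sets borel"
    and mu_supp: "emeasure \<mu> simplexS = 1"
    and F_def: "F = mcdf \<mu>"
    and F_diff1: "\<And>y. y \<in> simplexS \<Longrightarrow> (F has_derivative (\<lambda>h. DF y \<bullet> h)) (at y within simplexS)"
    and F_diff2: "\<And>y. y \<in> simplexS \<Longrightarrow> (DF has_derivative (\<lambda>h. D2F y *v h)) (at y within simplexS)"
    and F_cont2: "continuous_on simplexS D2F"
    and X_indep: "prob_space.indep_vars M (\<lambda>_. borel) X UNIV"
    and X_distr: "\<And>i. distr M borel (X i) = \<mu>"
    and m_lim: "filterlim m at_top sequentially"
    and x_int: "x \<in> simplexInt"
    and Fx_pos: "0 < F x" and Fx_lt1: "F x < 1"
  shows
    "weak_conv_m
       (\<lambda>n. distr M borel (\<lambda>\<omega>. sqrt (real n) *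
              (bernstein (ecdf X n \<omega>) (m n) x - bernstein F (m n) x)))
       (normal_distr 0 (F x * (1 - F x)))
     \<and>
     ((\<lambda>n. sqrt (real n) / real (m n)) \<longlonglongrightarrow> 0 \<longrightarrow>
      weak_conv_m
       (\<lambda>n. distr M borel (\<lambda>\<omega>. sqrt (real n) * (bernstein (ecdf X n \<omega>) (m n) x - F x)))
       (normal_distr 0 (F x * (1 - F x))))
     \<and>
     (\<forall>lam::real. lam > 0 \<longrightarrow> (\<lambda>n. sqrt (real n) / real (m n)) \<longlonglongrightarrow> lam \<longrightarrow>
      weak_conv_m
       (\<lambda>n. distr M borel (\<lambda>\<omega>. sqrt (real n) * (bernstein (ecdf X n \<omega>) (m n) x - F x)))
       (normal_distr
          (lam * ((1/2) * (\<Sum>i\<in>UNIV. \<Sum>j\<in>UNIV.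
              ((if i = j then x $ i else 0) - x $ i * x $ j) * D2F x $ i $ j)))
          (F x * (1 - F x))))"
proof -
  interpret iid_sample M \<mu> X
    using M mu_prob mu_sets X_indep X_distr by (simp add: iid_sample_def iid_sample_axioms_def)
  interpret C2_on_simplex F DF D2F
    using F_diff1 F_diff2 F_cont2 by unfold_locales
  have x: "simplex_point x"
    using x_int unfolding simplexInt_def by unfold_locales (auto simp: less_imp_le)
  have cont: "continuous (at x within simplexS) (mcdf \<mu>)"
    using has_derivative_continuous[OF F_diff1[OF simplex_point.in_simplexS[OF x]]] F_def by simp
  have clt: "weak_conv_m (\<lambda>n. distr M borel (\<lambda>\<omega>. sqrt (real n) *
      (bernstein (ecdf X n \<omega>) (m n) x - bernstein F (m n) x) + b n)) (normal_distr \<beta> (F x * (1 - F x)))"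
    if "b \<longlonglongrightarrow> \<beta>" for b \<beta>
    using bernstein_ecdf_clt[OF x cont _ _ m_lim that] Fx_pos Fx_lt1 F_def by simp
  have bias: "(\<lambda>n. sqrt (real n) * (bernstein F (m n) x - F x)) \<longlonglongrightarrow> l * bias_coeff x"
    if "(\<lambda>n. sqrt (real n) / real (m n)) \<longlonglongrightarrow> l" for l
    by (rule tendsto_mult_rescaled[OF m_lim bernstein_bias_tendsto[OF x] that])
  have "sqrt n * (e - bernstein F (m n) x) + sqrt n * (bernstein F (m n) x - F x) = sqrt n * (e - F x)" for n e
    by (simp add: algebra_simps)
  then have shifted: "weak_conv_m (\<lambda>n. distr M borel (\<lambda>\<omega>. sqrt (real n) * (bernstein (ecdf X n \<omega>) (m n) x - F x)))
      (normal_distr (l * bias_coeff x) (F x * (1 - F x)))"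
    if "(\<lambda>n. sqrt (real n) / real (m n)) \<longlonglongrightarrow> l" for l
    using clt[OF bias[OF that]] by simp
  show ?thesis
    using clt[of "\<lambda>_. 0" 0] shifted[of 0] shifted unfolding bias_coeff_def by simp
qed

end
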